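(* In the setting of the context, with $\varepsilon_0<1$, $0<\varepsilon\le\varepsilon_0$, and under (A1), (A2) and $\Delta t\ge\varepsilon$, the solutions $\bar v^{n+1}\in H_0^1(\Omega)$ of $a(\bar v^{n+1},\varphi)=\iota_h(\varphi)$ for all $\varphi\in H_0^1(\Omega)$ and $v_h^{n+1}\in V_h$ of $a(v_h^{n+1},\varphi_h)=\iota_h(\varphi_h)$ for all $\varphi_h\in V_h$ satisfy $$\|\bar v^{n+1}-v_h^{n+1}\|_{H_0^1}=O\Big(\frac{\varepsilon^6}{\Delta x^3}+\frac{\varepsilon^4}{\Delta x}+\varepsilon^2\Delta t\Big).$$
   Context: $\|\varphi\|_{H_0^1}=\|\varphi_x\|_{L^2}$. $\Omega=[0,1]$; $(v,u)$ solves $v_t-u_x=0$, $u_t-\varepsilon^{-2}v_x=g$ on $\Omega\times\mathbb{R}^+$ with $v=0$ on $\partial\Omega$. $\gamma=\Delta t^2(1-\varepsilon)^2/\varepsilon^2$, $a(v,\varphi)=\int_\Omega(\gamma v_x\varphi_x+v\varphi)dx$. $t^n=n\Delta t$. Uniform mesh $\Omega_i=[x_i,x_{i+1}]$, width $\Delta x$, midpoints $\bar x_i$, $v_i^n=v(\bar x_i,t^n)$, $u_i^n=u(\bar x_i,t^n)$, $g_i^n=g(\bar x_i,t^n)$; on $\Omega_i$: $\tilde v^n_x=\frac1{2\Delta x}\big(v^n_{i+1}-v^n_{i-1}+\frac{\Delta x}{\Delta t}(u^n_{i+1}+u^n_{i-1}-2u^n_i)\big)$, $\tilde u^n_x=\frac1{2\Delta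 x}\big(u^n_{i+1}-u^n_{i-1}+\frac{\Delta x}{\Delta t}(v^n_{i+1}+v^n_{i-1}-2v^n_i)\big)$, $\iota_{1,h}=v_i^n+\Delta t\,\tilde u^n_x$, $\iota_{2,h}=g_i^n+\varepsilon^{-1}\tilde v^n_x$; $\iota_h(\varphi)=\int_\Omega\iota_{1,h}\varphi-\Delta t^2(1-\varepsilon)\iota_{2,h}\varphi_x\,dx$. $V_h$: continuous piecewise linear functions on the mesh vanishing at $0$ and $1$. (A1) $u,v$ sufficiently smooth with $v=\varepsilon^2v^{(2)}+O(\varepsilon^3)$, $u_x=\varepsilon^2u^{(2)}_x+O(\varepsilon^3)$ in the norm $\|\varphi\|_{C^1}=\|\varphi\|_\infty+\|\nabla_{x,t}\varphi\|_\infty$, with $\varepsilon$-independent smooth $v^{(2)},u^{(2)}$. (A2) $\Delta t=\widehat{\mathrm{CFL}}\,\Delta x$, fixed $0<\widehat{\mathrm{CFL}}<1$. $O(\cdot)$: bounded by a constant independent of $\varepsilon,\Delta t,\Delta x$ times the expression. *)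

theory Defs
  imports "HOL-Analysis.Analysis"
begin

definition partial_x :: "(real \<Rightarrow> real \<Rightarrow> real) \<Rightarrow> real \<Rightarrow> real \<Rightarrow> real" where
  "partial_x f = (\<lambda>x t. deriv (\<lambda>y. f y t) x)"

definition partial_t :: "(real \<Rightarrow> real \<Rightarrow> real) \<Rightarrow> real \<Rightarrow> real \<Rightarrow> real" where
  "partial_t f = (\<lambda>x t. deriv (\<lambda>s. f x s) t)"

definition smooth2 :: "(real \<Rightarrow> real \<Rightarrow> real) \<Rightarrow> bool" where
  "smooth2 f \<longleftrightarrow> (\<forall>j k. let h = (partial_x ^^ j) ((partial_t ^^ k) f) in
      (\<forall>x t. (\<lambda>y. h y t) differentiable (at x) \<and> (\<lambda>s. h x s) differentiable (at t)) \<and>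
      continuous_on UNIV (\<lambda>p. h (fst p) (snd p)))"

definition bounded_smooth2 :: "(real \<Rightarrow> real \<Rightarrow> real) \<Rightarrow> bool" where
  "bounded_smooth2 f \<longleftrightarrow> smooth2 f \<and>
     (\<forall>j k. \<exists>B. \<forall>x. \<forall>t\<ge>0. \<bar>((partial_x ^^ j) ((partial_t ^^ k) f)) x t\<bar> \<le> B)"

definition C1_norm_le :: "(real \<Rightarrow> real \<Rightarrow> real) \<Rightarrow> real \<Rightarrow> bool" where
  "C1_norm_le f M \<longleftrightarrow> (\<exists>a b. a + b \<le> M \<and>
     (\<forall>x. \<forall>t\<ge>0. \<bar>f x t\<bar> \<le> a) \<and>
     (\<forall>x. \<forall>t\<ge>0. sqrt ((partial_x f x t)\<^sup>2 + (partial_t f x t)\<^sup>2) \<le> b))"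

text \<open>phi in H_0^1(0,1) with weak derivative dphi (in L^2(0,1)).\<close>
definition H01_pair :: "(real \<Rightarrow> real) \<Rightarrow> (real \<Rightarrow> real) \<Rightarrow> bool" where
  "H01_pair \<phi> d\<phi> \<longleftrightarrow> set_borel_measurable lborel {0..1} d\<phi> \<and>
     set_integrable lborel {0..1} (\<lambda>x. (d\<phi> x)\<^sup>2) \<and>
     (\<forall>x\<in>{0..1}. \<phi> x = (LINT y:{0..x}|lborel. d\<phi> y)) \<and> \<phi> 1 = 0"

definition H01_norm :: "(real \<Rightarrow> real) \<Rightarrow> real" where
  "H01_norm d\<phi> = sqrt (LINT x:{0..1}|lborel. (d\<phi> x)\<^sup>2)"

definition Vh :: "nat \<Rightarrow> (real \<Rightarrow> real) \<Rightarrow> bool" where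
  "Vh N \<phi> \<longleftrightarrow> (\<exists>c :: nat \<Rightarrow> real. c 0 = 0 \<and> c N = 0 \<and>
     (\<forall>i<N. \<forall>x\<in>{real i / real N .. real (Suc i) / real N}.
        \<phi> x = c i + (c (Suc i) - c i) * (real N * x - real i)))"

definition gamma_coef :: "real \<Rightarrow> real \<Rightarrow> real" where
  "gamma_coef \<epsilon> dt = dt\<^sup>2 * (1 - \<epsilon>)\<^sup>2 / \<epsilon>\<^sup>2"

definition a_form :: "real \<Rightarrow> real \<Rightarrow> (real \<Rightarrow> real) \<Rightarrow> (real \<Rightarrow> real)
    \<Rightarrow> (real \<Rightarrow> real) \<Rightarrow> (real \<Rightarrow> real) \<Rightarrow> real" where
  "a_form \<epsilon> dt w dw \<phi> d\<phi> =
     (LINT x:{0..1}|lborel. gamma_coef \<epsilon> dt * dw x * d\<phi> x + w x * \<phi> x)"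

text \<open>cell midpoints xbar_i = (i + 1/2) dx, i an integer (i = -1, N are ghost cells)\<close>
definition xbar :: "real \<Rightarrow> int \<Rightarrow> real" where
  "xbar dx i = (real_of_int i + 1/2) * dx"

definition cell :: "real \<Rightarrow> real \<Rightarrow> int" where
  "cell dx x = \<lfloor>x / dx\<rfloor>"

definition tilde_vx :: "(real \<Rightarrow> real \<Rightarrow> real) \<Rightarrow> (real \<Rightarrow> real \<Rightarrow> real)
    \<Rightarrow> real \<Rightarrow> real \<Rightarrow> nat \<Rightarrow> int \<Rightarrow> real" where
  "tilde_vx v u dx dt n i = (let V = (\<lambda>j. v (xbar dx j) (real n * dt));
       U = (\<lambda>j. u (xbar dx j) (real n * dt)) in
     (V (i+1) - V (i-1) + dx / dt * (U (i+1) + U (i-1) - 2 * U i)) / (2 * dx))"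

definition tilde_ux :: "(real \<Rightarrow> real \<Rightarrow> real) \<Rightarrow> (real \<Rightarrow> real \<Rightarrow> real)
    \<Rightarrow> real \<Rightarrow> real \<Rightarrow> nat \<Rightarrow> int \<Rightarrow> real" where
  "tilde_ux v u dx dt n i = (let V = (\<lambda>j. v (xbar dx j) (real n * dt));
       U = (\<lambda>j. u (xbar dx j) (real n * dt)) in
     (U (i+1) - U (i-1) + dx / dt * (V (i+1) + V (i-1) - 2 * V i)) / (2 * dx))"

definition iota1 :: "(real \<Rightarrow> real \<Rightarrow> real) \<Rightarrow> (real \<Rightarrow> real \<Rightarrow> real)
    \<Rightarrow> real \<Rightarrow> real \<Rightarrow> nat \<Rightarrow> real \<Rightarrow> real" where
  "iota1 v u dx dt n x = (let i = cell dx x in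
     v (xbar dx i) (real n * dt) + dt * tilde_ux v u dx dt n i)"

definition iota2 :: "(real \<Rightarrow> real \<Rightarrow> real) \<Rightarrow> (real \<Rightarrow> real \<Rightarrow> real) \<Rightarrow> (real \<Rightarrow> real \<Rightarrow> real)
    \<Rightarrow> real \<Rightarrow> real \<Rightarrow> real \<Rightarrow> nat \<Rightarrow> real \<Rightarrow> real" where
  "iota2 v u g \<epsilon> dx dt n x = (let i = cell dx x in
     g (xbar dx i) (real n * dt) + tilde_vx v u dx dt n i / \<epsilon>)"

definition iota_h :: "(real \<Rightarrow> real \<Rightarrow> real) \<Rightarrow> (real \<Rightarrow> real \<Rightarrow> real) \<Rightarrow> (real \<Rightarrow> real \<Rightarrow> real)
    \<Rightarrow> real \<Rightarrow> real \<Rightarrow> real \<Rightarrow> nat \<Rightarrow> (real \<Rightarrow> real) \<Rightarrow> (real \<Rightarrow> real) \<Rightarrow> real" where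
  "iota_h v u g \<epsilon> dx dt n \<phi> d\<phi> =
     (LINT x:{0..1}|lborel. iota1 v u dx dt n x * \<phi> x
        - dt\<^sup>2 * (1 - \<epsilon>) * iota2 v u g \<epsilon> dx dt n x * d\<phi> x)"

end

theory Submission
  imports Defs
begin

text \<open>
  The continuous solution \<open>vb\<close> and the Galerkin solution \<open>vh\<close> of the same weak problem
  \<open>\<gamma> (v', \<phi>') + (v, \<phi>) = (\<iota>\<^sub>1, \<phi>) - \<beta> (\<iota>\<^sub>2, \<phi>')\<close> are compared through the nodal interpolant
  \<open>I vb\<close>. In one dimension \<open>\<eta> = vb - I vb\<close> vanishes at the nodes, so \<open>\<eta>'\<close> is orthogonal to
  every cellwise constant function: to \<open>\<iota>\<^sub>2\<close>, which is constant on the cells, and to all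
  derivatives of \<open>V\<^sub>h\<close>. Hence, with \<open>\<theta> = I vb - vh \<in> V\<^sub>h\<close>, the error splits orthogonally,
  \<open>\<parallel>(vb - vh)'\<parallel>\<^sup>2 = \<parallel>\<eta>'\<parallel>\<^sup>2 + \<parallel>\<theta>'\<parallel>\<^sup>2\<close>. Testing the continuous problem with \<open>\<eta>\<close> and using the
  cellwise Poincare inequality \<open>\<parallel>\<eta>\<parallel> \<le> \<Delta>x \<parallel>\<eta>'\<parallel>\<close> gives \<open>\<parallel>\<eta>'\<parallel> \<lesssim> \<parallel>\<iota>\<^sub>1 - vb\<parallel> / (\<gamma> N)\<close>, and
  Galerkin orthogonality tested with \<open>\<theta>\<close> gives \<open>\<parallel>\<theta>'\<parallel>\<^sup>2 \<le> \<parallel>\<eta>'\<parallel>\<^sup>2 / (2 \<gamma> N\<^sup>2)\<close>.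
  By (A1) the data satisfy \<open>\<iota>\<^sub>1 = O(\<epsilon>\<^sup>2)\<close> and \<open>\<iota>\<^sub>2 = O(1)\<close>; with \<open>\<gamma> = \<Delta>t\<^sup>2(1-\<epsilon>)\<^sup>2/\<epsilon>\<^sup>2\<close> and
  \<open>\<epsilon> \<le> \<Delta>t\<close> this yields the error bound \<open>O(\<epsilon>\<^sup>2 \<Delta>t)\<close>, the last term of the claimed one.
\<close>

section \<open>Piecewise linear functions on the uniform mesh\<close>

definition mesh_cell :: "nat \<Rightarrow> real \<Rightarrow> nat" where
  "mesh_cell N x = nat \<lfloor>real N * x\<rfloor>"

definition pw_linear :: "(nat \<Rightarrow> real) \<Rightarrow> nat \<Rightarrow> real \<Rightarrow> real" where
  "pw_linear c N x = c (mesh_cell N x)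
     + (c (Suc (mesh_cell N x)) - c (mesh_cell N x)) * (real N * x - real (mesh_cell N x))"

definition pw_slope :: "(nat \<Rightarrow> real) \<Rightarrow> nat \<Rightarrow> real \<Rightarrow> real" where
  "pw_slope c N x = real N * (c (Suc (mesh_cell N x)) - c (mesh_cell N x))"

lemma mesh_cell_eq:
  assumes "0 < N" "real j / real N \<le> x" "x < real (Suc j) / real N"
  shows "mesh_cell N x = j"
proof -
  have "real j \<le> real N * x" "real N * x < real j + 1"
    using assms by (auto simp: field_simps)
  then have "\<lfloor>real N * x\<rfloor> = int j" by (simp add: floor_eq_iff)
  then show ?thesis by (simp add: mesh_cell_def)
qed

lemma mesh_cell_node: "0 < N \<Longrightarrow> mesh_cell N (real j / real N) = j"
  by (rule mesh_cell_eq) (auto simp: field_simps)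

lemma mesh_cell_bounds:
  assumes "0 < N" "0 \<le> x"
  shows "real (mesh_cell N x) / real N \<le> x" "x < real (Suc (mesh_cell N x)) / real N"
proof -
  have k: "real (mesh_cell N x) = of_int \<lfloor>real N * x\<rfloor>"
    using assms by (simp add: mesh_cell_def)
  have "of_int \<lfloor>real N * x\<rfloor> \<le> real N * x" "real N * x < of_int \<lfloor>real N * x\<rfloor> + 1"
    by linarith+
  then show "real (mesh_cell N x) / real N \<le> x" "x < real (Suc (mesh_cell N x)) / real N"
    using assms k by (auto simp: field_simps)
qed

lemma mesh_cell_le:
  assumes "x \<in> {0..1}"
  shows "mesh_cell N x \<le> N"
proof -
  have "real N * x \<le> real N" using assms by (simp add: mult_left_le)
  then show ?thesis unfolding mesh_cell_def by linarith
qed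

lemma mesh_cell_subset:
  assumes "0 < N" "j < N"
  shows "{real j / real N..real (Suc j) / real N} \<subseteq> {0..1}"
  using assms by (auto simp: field_simps)

lemma pw_linear_node: "0 < N \<Longrightarrow> pw_linear c N (real j / real N) = c j"
  by (simp add: pw_linear_def mesh_cell_node)

lemma pw_linear_diff: "pw_linear (\<lambda>j. a j - b j) N x = pw_linear a N x - pw_linear b N x"
  by (simp add: pw_linear_def algebra_simps)

lemma pw_slope_diff: "pw_slope (\<lambda>j. a j - b j) N x = pw_slope a N x - pw_slope b N x"
  by (simp add: pw_slope_def algebra_simps)

lemma pw_slope_has_integral_cell:
  assumes N: "0 < N" and x: "real j / real N \<le> x" "x \<le> real (Suc j) / real N"
  shows "(pw_slope c N has_integral (x - real j / real N) * (real N * (c (Suc j) - c j)))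
           {real j / real N..x}"
proof (rule has_integral_spike_finite[where S="{real (Suc j) / real N}"])
  show "((\<lambda>_. real N * (c (Suc j) - c j)) has_integral
          (x - real j / real N) * (real N * (c (Suc j) - c j))) {real j / real N..x}"
    using has_integral_const_real[of "real N * (c (Suc j) - c j)" "real j / real N" x] x by simp
  fix y assume "y \<in> {real j / real N..x} - {real (Suc j) / real N}"
  then have "real j / real N \<le> y" "y < real (Suc j) / real N" using x by auto
  then show "pw_slope c N y = real N * (c (Suc j) - c j)"
    using mesh_cell_eq[OF N] by (simp add: pw_slope_def)
qed auto

lemma pw_slope_has_integral_node:
  assumes N: "0 < N"
  shows "(pw_slope c N has_integral (c j - c 0)) {0..real j / real N}"
proof (induction j)
  case 0
  then show ?case by auto
next
  case (Suc j)
  have "(pw_slope c N has_integral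
          (real (Suc j) / real N - real j / real N) * (real N * (c (Suc j) - c j)))
        {real j / real N..real (Suc j) / real N}"
    by (rule pw_slope_has_integral_cell[OF N]) (auto simp: divide_right_mono)
  moreover have "(real (Suc j) / real N - real j / real N) * (real N * (c (Suc j) - c j))
      = c (Suc j) - c j"
    using N by (simp add: field_simps)
  ultimately have "(pw_slope c N has_integral (c (Suc j) - c j))
      {real j / real N..real (Suc j) / real N}"
    by (simp only:)
  from has_integral_combine[OF _ _ Suc this] show ?case
    using N by (simp add: field_simps)
qed

lemma pw_slope_has_integral:
  assumes N: "0 < N" and x: "0 \<le> x"
  shows "(pw_slope c N has_integral (pw_linear c N x - c 0)) {0..x}"
proof -
  let ?k = "mesh_cell N x"
  note k = mesh_cell_bounds[OF N x]
  have "(pw_slope c N has_integral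
         (c ?k - c 0) + (x - real ?k / real N) * (real N * (c (Suc ?k) - c ?k))) {0..x}"
    using k by (intro has_integral_combine[OF _ _ pw_slope_has_integral_node[OF N]]
        pw_slope_has_integral_cell[OF N]) auto
  moreover have "(c ?k - c 0) + (x - real ?k / real N) * (real N * (c (Suc ?k) - c ?k))
      = pw_linear c N x - c 0"
    using N by (simp add: pw_linear_def field_simps)
  ultimately show ?thesis by simp
qed

lemma Vh_imp_pw_linear:
  assumes "Vh N \<phi>" "0 < N" "x \<in> {0..1}"
  shows "\<phi> x = pw_linear (\<lambda>j. \<phi> (real j / real N)) N x"
proof -
  obtain c where c0: "c 0 = 0" and cN: "c N = 0" and c: "\<And>i x. i < N \<Longrightarrow>
      x \<in> {real i / real N .. real (Suc i) / real N} \<Longrightarrow> \<phi> x = c i + (c (Suc i) - c i) * (real N * x - real i)"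
    using assms(1) unfolding Vh_def by blast
  have nodes: "\<phi> (real j / real N) = c j" if "j \<le> N" for j
  proof (cases "j = N")
    case True
    then show ?thesis using c[of "N - 1" 1] cN assms(2) by (simp add: field_simps)
  next
    case False
    then show ?thesis using c[of j "real j / real N"] that by (simp add: field_simps)
  qed
  have k: "mesh_cell N x \<le> N" by (rule mesh_cell_le[OF assms(3)])
  show ?thesis
  proof (cases "mesh_cell N x = N")
    case True
    then have "x = 1" using mesh_cell_bounds(1)[OF assms(2), of x] assms(2,3) by auto
    then show ?thesis using nodes[of N] True assms(2) cN by (simp add: pw_linear_def)
  next
    case False
    then have "mesh_cell N x < N" using k by simp
    then show ?thesis
      using c[of "mesh_cell N x" x] mesh_cell_bounds[OF assms(2), of x] assms(3)
        nodes[of "mesh_cell N x"] nodes[of "Suc (mesh_cell N x)"]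
      by (auto simp: pw_linear_def)
  qed
qed

lemma pw_linear_Vh:
  assumes "0 < N" "c 0 = 0" "c N = 0"
  shows "Vh N (pw_linear c N)"
  unfolding Vh_def
proof (intro exI[of _ c] conjI allI impI ballI)
  fix i x assume i: "i < N" and x: "x \<in> {real i / real N..real (Suc i) / real N}"
  show "pw_linear c N x = c i + (c (Suc i) - c i) * (real N * x - real i)"
  proof (cases "x = real (Suc i) / real N")
    case True
    then show ?thesis using pw_linear_node[OF assms(1), of c "Suc i"] assms(1) by simp
  next
    case False
    then have "mesh_cell N x = i" using x by (intro mesh_cell_eq[OF assms(1)]) auto
    then show ?thesis by (simp add: pw_linear_def)
  qed
qed (use assms in auto)

lemma integral_initial_cells:
  fixes F :: "real \<Rightarrow> real"
  assumes N: "0 < N" and F: "F integrable_on {0..1}" and m: "m \<le> N"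
  shows "integral {0..real m / real N} F
           = (\<Sum>j<m. integral {real j / real N..real (Suc j) / real N} F)"
  using m
proof (induction m)
  case 0
  then show ?case by simp
next
  case (Suc m)
  have "F integrable_on {0..real (Suc m) / real N}"
    using Suc.prems N by (intro integrable_on_subinterval[OF F]) (auto simp: field_simps)
  then have "integral {0..real m / real N} F + integral {real m / real N..real (Suc m) / real N} F
      = integral {0..real (Suc m) / real N} F"
    by (intro Henstock_Kurzweil_Integration.integral_combine) (auto simp: divide_right_mono)
  then show ?case using Suc by simp
qed

lemma integral_sum_cells:
  fixes F :: "real \<Rightarrow> real"
  assumes "0 < N" "F integrable_on {0..1}"
  shows "integral {0..1} F = (\<Sum>j<N. integral {real j / real N..real (Suc j) / real N} F)"
  using integral_initial_cells[OF assms order_refl] assms(1) by simp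

lemma integral_cell_primitive:
  fixes d :: "real \<Rightarrow> real"
  assumes N: "0 < N" and j: "j < N" and d: "d integrable_on {0..1}"
    and \<eta>: "\<And>x. x \<in> {0..1} \<Longrightarrow> \<eta> x = integral {0..x} d"
    and x: "real j / real N \<le> x" "x \<le> real (Suc j) / real N"
  shows "integral {real j / real N..x} d = \<eta> x - \<eta> (real j / real N)"
proof -
  have sub: "{real j / real N..real (Suc j) / real N} \<subseteq> {0..1}" by (rule mesh_cell_subset[OF N j])
  then have "integral {0..real j / real N} d + integral {real j / real N..x} d = integral {0..x} d"
    using x by (intro Henstock_Kurzweil_Integration.integral_combine integrable_on_subinterval[OF d]) auto
  moreover have "x \<in> {0..1}" "real j / real N \<in> {0..1}"
    using subsetD[OF sub, of x] subsetD[OF sub, of "real j / real N"] x by auto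
  ultimately show ?thesis using \<eta> by simp
qed

lemma integral_mesh_step_mult_eq_0:
  fixes d :: "real \<Rightarrow> real"
  assumes N: "0 < N" and d: "d integrable_on {0..1}"
    and \<eta>: "\<And>x. x \<in> {0..1} \<Longrightarrow> \<eta> x = integral {0..x} d"
    and nodes: "\<And>j. j \<le> N \<Longrightarrow> \<eta> (real j / real N) = 0"
    and Gd: "(\<lambda>x. G (mesh_cell N x) * d x) integrable_on {0..1}"
  shows "integral {0..1} (\<lambda>x. G (mesh_cell N x) * d x) = 0"
proof -
  have "integral {real j / real N..real (Suc j) / real N} (\<lambda>x. G (mesh_cell N x) * d x) = 0"
    if j: "j < N" for j
  proof -
    let ?C = "{real j / real N..real (Suc j) / real N}"
    have "integral ?C (\<lambda>x. G (mesh_cell N x) * d x) = integral ?C (\<lambda>x. G j * d x)"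
    proof (rule integral_spike[where S="{real (Suc j) / real N}"])
      fix x assume "x \<in> ?C - {real (Suc j) / real N}"
      then show "G j * d x = G (mesh_cell N x) * d x" by (subst mesh_cell_eq[OF N]) auto
    qed auto
    also have "\<dots> = G j * (\<eta> (real (Suc j) / real N) - \<eta> (real j / real N))"
      using integral_cell_primitive[OF N j d \<eta>] by (simp add: divide_right_mono)
    finally show ?thesis using nodes[of j] nodes[of "Suc j"] j by simp
  qed
  then show ?thesis using integral_sum_cells[OF N Gd] by simp
qed

lemma square_integral_le:
  fixes g :: "real \<Rightarrow> real"
  assumes ab: "a \<le> b" and g: "g integrable_on {a..b}" and g2: "(\<lambda>x. (g x)\<^sup>2) integrable_on {a..b}"
  shows "(integral {a..b} g)\<^sup>2 \<le> (b - a) * integral {a..b} (\<lambda>x. (g x)\<^sup>2)"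
proof (cases "a = b")
  case True
  then show ?thesis by simp
next
  case False
  then have L: "0 < b - a" using ab by simp
  define I where "I = integral {a..b} g"
  define J where "J = integral {a..b} (\<lambda>x. (g x)\<^sup>2)"
  define m where "m = I / (b - a)"
  \<comment> \<open>expand \<open>0 \<le> \<integral> (g - m)\<^sup>2\<close> with \<open>m\<close> the mean of \<open>g\<close>\<close>
  have gm: "(\<lambda>x. (g x)\<^sup>2 - 2 * m * g x) integrable_on {a..b}"
    using g g2 by (intro integrable_diff integrable_on_mult_right)
  have "0 \<le> integral {a..b} (\<lambda>x. (g x)\<^sup>2 - 2 * m * g x + m\<^sup>2)"
  proof (rule integral_nonneg)
    fix x
    have "0 \<le> (g x - m)\<^sup>2" by simp
    then show "0 \<le> (g x)\<^sup>2 - 2 * m * g x + m\<^sup>2" by (simp add: power2_eq_square algebra_simps)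
  qed (use gm in \<open>auto intro!: integrable_add\<close>)
  also have "\<dots> = integral {a..b} (\<lambda>x. (g x)\<^sup>2 - 2 * m * g x) + (b - a) * m\<^sup>2"
    using ab by (subst integral_add[OF gm]) auto
  also have "\<dots> = J - 2 * m * I + (b - a) * m\<^sup>2"
    using g g2 unfolding I_def J_def by (subst integral_diff) (auto intro: integrable_on_mult_right)
  also have "\<dots> = J - I\<^sup>2 / (b - a)"
    using L by (simp add: m_def power2_eq_square)
  finally show ?thesis using L unfolding I_def J_def by (simp add: field_simps)
qed

lemma square_integral_le_initial:
  fixes d :: "real \<Rightarrow> real"
  assumes x: "a \<le> x" "x \<le> b" and d: "d integrable_on {a..b}" and d2: "(\<lambda>x. (d x)\<^sup>2) integrable_on {a..b}"
  shows "(integral {a..x} d)\<^sup>2 \<le> (b - a) * integral {a..b} (\<lambda>x. (d x)\<^sup>2)"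
proof -
  have sub: "{a..x} \<subseteq> {a..b}" using x by auto
  have "(integral {a..x} d)\<^sup>2 \<le> (x - a) * integral {a..x} (\<lambda>x. (d x)\<^sup>2)"
    using square_integral_le x integrable_on_subinterval[OF d sub] integrable_on_subinterval[OF d2 sub]
    by simp
  also have "\<dots> \<le> (b - a) * integral {a..b} (\<lambda>x. (d x)\<^sup>2)"
  proof (rule mult_mono)
    have "integral {a..x} (\<lambda>x. (d x)\<^sup>2) + integral {x..b} (\<lambda>x. (d x)\<^sup>2) = integral {a..b} (\<lambda>x. (d x)\<^sup>2)"
      using x by (intro Henstock_Kurzweil_Integration.integral_combine d2) auto
    moreover have "0 \<le> integral {x..b} (\<lambda>x. (d x)\<^sup>2)"
      using integrable_on_subinterval[OF d2, of x b] x by (intro integral_nonneg) auto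
    ultimately show "integral {a..x} (\<lambda>x. (d x)\<^sup>2) \<le> integral {a..b} (\<lambda>x. (d x)\<^sup>2)" by simp
    show "0 \<le> integral {a..x} (\<lambda>x. (d x)\<^sup>2)"
      using integrable_on_subinterval[OF d2 sub] by (intro integral_nonneg) auto
  qed (use x in auto)
  finally show ?thesis .
qed

lemma poincare_mesh:
  fixes d :: "real \<Rightarrow> real"
  assumes N: "0 < N" and d: "d integrable_on {0..1}" and d2: "(\<lambda>x. (d x)\<^sup>2) integrable_on {0..1}"
    and \<eta>2: "(\<lambda>x. (\<eta> x)\<^sup>2) integrable_on {0..1}"
    and \<eta>: "\<And>x. x \<in> {0..1} \<Longrightarrow> \<eta> x = integral {0..x} d"
    and nodes: "\<And>j. j \<le> N \<Longrightarrow> \<eta> (real j / real N) = 0"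
  shows "integral {0..1} (\<lambda>x. (\<eta> x)\<^sup>2) \<le> (1 / real N)\<^sup>2 * integral {0..1} (\<lambda>x. (d x)\<^sup>2)"
proof -
  have cell: "integral {real j / real N..real (Suc j) / real N} (\<lambda>x. (\<eta> x)\<^sup>2)
      \<le> (1 / real N)\<^sup>2 * integral {real j / real N..real (Suc j) / real N} (\<lambda>x. (d x)\<^sup>2)"
    if j: "j < N" for j
  proof -
    let ?a = "real j / real N" and ?b = "real (Suc j) / real N"
    let ?J = "integral {?a..?b} (\<lambda>x. (d x)\<^sup>2)"
    have sub: "{?a..?b} \<subseteq> {0..1}" by (rule mesh_cell_subset[OF N j])
    have len: "?b - ?a = 1 / real N" using N by (simp add: field_simps)
    have "(\<eta> x)\<^sup>2 \<le> 1 / real N * ?J" if x: "x \<in> {?a..?b}" for x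
      using square_integral_le_initial[of ?a x ?b d] x integrable_on_subinterval[OF d sub]
        integrable_on_subinterval[OF d2 sub] integral_cell_primitive[OF N j d \<eta>, of x] nodes[of j] j len
      by simp
    then have "integral {?a..?b} (\<lambda>x. (\<eta> x)\<^sup>2) \<le> integral {?a..?b} (\<lambda>x. 1 / real N * ?J)"
      using integrable_on_subinterval[OF \<eta>2 sub] by (intro integral_le) auto
    also have "\<dots> = (1 / real N)\<^sup>2 * ?J" using len by (simp add: divide_right_mono power2_eq_square)
    finally show ?thesis .
  qed
  have "integral {0..1} (\<lambda>x. (\<eta> x)\<^sup>2)
      = (\<Sum>j<N. integral {real j / real N..real (Suc j) / real N} (\<lambda>x. (\<eta> x)\<^sup>2))"
    by (rule integral_sum_cells[OF N \<eta>2])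
  also have "\<dots> \<le> (\<Sum>j<N. (1 / real N)\<^sup>2 * integral {real j / real N..real (Suc j) / real N} (\<lambda>x. (d x)\<^sup>2))"
    by (rule sum_mono) (use cell in auto)
  also have "\<dots> = (1 / real N)\<^sup>2 * integral {0..1} (\<lambda>x. (d x)\<^sup>2)"
    using integral_sum_cells[OF N d2] by (simp add: sum_distrib_left)
  finally show ?thesis .
qed

section \<open>Square-integrable functions and \<open>H\<^sup>1\<^sub>0\<close> pairs\<close>

definition L2 :: "(real \<Rightarrow> real) \<Rightarrow> bool" where
  "L2 g \<longleftrightarrow> set_borel_measurable lborel {0..1::real} g \<and> set_integrable lborel {0..1::real} (\<lambda>x. (g x)\<^sup>2)"

lemma set_borel_measurable_mult:
  assumes "set_borel_measurable lborel S f" "set_borel_measurable lborel S g"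
  shows "set_borel_measurable lborel S (\<lambda>x. f x * g x :: real)"
proof -
  have "(\<lambda>x. (indicator S x *\<^sub>R f x) * (indicator S x *\<^sub>R g x)) \<in> borel_measurable lborel"
    using assms unfolding set_borel_measurable_def by measurable
  moreover have "(\<lambda>x. (indicator S x *\<^sub>R f x) * (indicator S x *\<^sub>R g x)) = (\<lambda>x. indicator S x *\<^sub>R (f x * g x))"
    by (auto simp: indicator_def)
  ultimately show ?thesis unfolding set_borel_measurable_def by simp
qed

lemma set_borel_measurable_add:
  assumes "set_borel_measurable lborel S f" "set_borel_measurable lborel S g"
  shows "set_borel_measurable lborel S (\<lambda>x. f x + g x :: real)"
proof -
  have "(\<lambda>x. (indicator S x *\<^sub>R f x) + (indicator S x *\<^sub>R g x)) \<in> borel_measurable lborel"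
    using assms unfolding set_borel_measurable_def by measurable
  moreover have "(\<lambda>x. (indicator S x *\<^sub>R f x) + (indicator S x *\<^sub>R g x)) = (\<lambda>x. indicator S x *\<^sub>R (f x + g x))"
    by (auto simp: indicator_def)
  ultimately show ?thesis unfolding set_borel_measurable_def by simp
qed

lemma set_borel_measurable_cmult:
  assumes "set_borel_measurable lborel S f"
  shows "set_borel_measurable lborel S (\<lambda>x. c * f x :: real)"
proof -
  have "(\<lambda>x. c * (indicator S x *\<^sub>R f x)) \<in> borel_measurable lborel"
    using assms unfolding set_borel_measurable_def by measurable
  moreover have "(\<lambda>x. c * (indicator S x *\<^sub>R f x)) = (\<lambda>x. indicator S x *\<^sub>R (c * f x))"
    by (auto simp: indicator_def)
  ultimately show ?thesis unfolding set_borel_measurable_def by simp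
qed

lemma borel_measurable_imp_set_borel_measurable:
  assumes "f \<in> borel_measurable borel" "S \<in> sets borel"
  shows "set_borel_measurable lborel S (f :: real \<Rightarrow> real)"
  using assms unfolding set_borel_measurable_def by measurable

lemma L2_mult_set_integrable:
  assumes "L2 f" "L2 g"
  shows "set_integrable lborel {0..1} (\<lambda>x. f x * g x)"
proof (rule set_integrable_bound[where f="\<lambda>x. ((f x)\<^sup>2 + (g x)\<^sup>2) / 2"])
  show "set_integrable lborel {0..1} (\<lambda>x. ((f x)\<^sup>2 + (g x)\<^sup>2) / 2)"
    using assms unfolding L2_def by (intro set_integrable_divide set_integral_add) auto
  show "set_borel_measurable lborel {0..1} (\<lambda>x. f x * g x)"
    using assms unfolding L2_def by (intro set_borel_measurable_mult) auto
  have "\<bar>f x * g x\<bar> \<le> ((f x)\<^sup>2 + (g x)\<^sup>2) / 2" for x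
  proof -
    have "0 \<le> (\<bar>f x\<bar> - \<bar>g x\<bar>)\<^sup>2" by simp
    then show ?thesis by (simp add: power2_eq_square abs_mult algebra_simps)
  qed
  then show "AE x in lborel. x \<in> {0..1} \<longrightarrow> norm (f x * g x) \<le> norm (((f x)\<^sup>2 + (g x)\<^sup>2) / 2)"
    by auto
qed

lemma L2_add: assumes "L2 f" "L2 g" shows "L2 (\<lambda>x. f x + g x)"
proof -
  have "set_integrable lborel {0..1} (\<lambda>x. (f x)\<^sup>2 + (g x)\<^sup>2 + 2 * (f x * g x))"
    using assms L2_mult_set_integrable[OF assms] unfolding L2_def
    by (intro set_integral_add set_integrable_mult_right) auto
  then have "set_integrable lborel {0..1} (\<lambda>x. (f x + g x)\<^sup>2)"
    by (simp add: power2_eq_square algebra_simps)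
  with assms show ?thesis unfolding L2_def by (simp add: set_borel_measurable_add)
qed

lemma L2_cmult: assumes "L2 f" shows "L2 (\<lambda>x. c * f x)"
proof -
  have "set_integrable lborel {0..1} (\<lambda>x. c\<^sup>2 * (f x)\<^sup>2)"
    using assms unfolding L2_def by (intro set_integrable_mult_right) auto
  with assms show ?thesis unfolding L2_def by (simp add: power_mult_distrib set_borel_measurable_cmult)
qed

lemma L2_diff: assumes "L2 f" "L2 g" shows "L2 (\<lambda>x. f x - g x)"
  using L2_add[OF assms(1) L2_cmult[OF assms(2), of "-1"]] by simp

lemma L2_cong:
  assumes "L2 f" "\<And>x. x \<in> {0..1} \<Longrightarrow> f x = g x"
  shows "L2 g"
proof -
  have "(\<lambda>x. indicator {0..1::real} x *\<^sub>R f x) = (\<lambda>x. indicator {0..1} x *\<^sub>R g x)"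
    using assms(2) by (auto simp: indicator_def)
  moreover have "set_integrable lborel {0..1} (\<lambda>x. (f x)\<^sup>2) = set_integrable lborel {0..1} (\<lambda>x. (g x)\<^sup>2)"
    using assms(2) by (intro set_integrable_cong) auto
  ultimately show ?thesis using assms(1) unfolding L2_def set_borel_measurable_def by simp
qed

lemma L2_bounded:
  assumes "set_borel_measurable lborel {0..1} f" "\<And>x. x \<in> {0..1} \<Longrightarrow> \<bar>f x\<bar> \<le> B"
  shows "L2 f"
proof -
  have "set_integrable lborel {0..1} (\<lambda>x. (f x)\<^sup>2)"
  proof (rule set_integrable_bound[where f="\<lambda>x. B\<^sup>2"])
    show "set_integrable lborel {0..1::real} (\<lambda>x. B\<^sup>2)"
      unfolding set_integrable_def by (rule borel_integrable_compact) auto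
    show "set_borel_measurable lborel {0..1} (\<lambda>x. (f x)\<^sup>2)"
      using set_borel_measurable_mult[OF assms(1) assms(1)] by (simp add: power2_eq_square)
    have "(f x)\<^sup>2 \<le> B\<^sup>2" if "x \<in> {0..1}" for x
      using power_mono[OF _ abs_ge_zero, of "f x" B 2] assms(2)[OF that] by simp
    then show "AE x in lborel. x \<in> {0..1} \<longrightarrow> norm ((f x)\<^sup>2) \<le> norm (B\<^sup>2)"
      by auto
  qed
  with assms show ?thesis unfolding L2_def by simp
qed

lemma L2_set_integrable: assumes "L2 f" shows "set_integrable lborel {0..1} f"
proof -
  have "L2 (\<lambda>_. 1)" by (rule L2_bounded[of _ 1]) (auto intro: borel_measurable_imp_set_borel_measurable)
  from L2_mult_set_integrable[OF assms this] show ?thesis by simp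
qed

lemma L2_mult_integrable_on: "L2 f \<Longrightarrow> L2 g \<Longrightarrow> (\<lambda>x. f x * g x) integrable_on {0..1}"
  using set_borel_integral_eq_integral(1)[OF L2_mult_set_integrable] .

lemma L2_set_integral_mult:
  "L2 f \<Longrightarrow> L2 g \<Longrightarrow> (LINT x:{0..1}|lborel. f x * g x) = integral {0..1} (\<lambda>x. f x * g x)"
  using set_borel_integral_eq_integral(2)[OF L2_mult_set_integrable] .

lemma L2_square_integrable_on: "L2 f \<Longrightarrow> (\<lambda>x. (f x)\<^sup>2) integrable_on {0..1}"
  using L2_mult_integrable_on[of f f] by (simp add: power2_eq_square)

lemma L2_mesh_step:
  assumes "0 < N"
  shows "L2 (\<lambda>x. G (mesh_cell N x))"
proof (rule L2_bounded[where B="\<Sum>i\<le>N. \<bar>G i\<bar>"])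
  show "set_borel_measurable lborel {0..1} (\<lambda>x. G (mesh_cell N x))"
    by (rule borel_measurable_imp_set_borel_measurable) (auto simp: mesh_cell_def)
  show "\<bar>G (mesh_cell N x)\<bar> \<le> (\<Sum>i\<le>N. \<bar>G i\<bar>)" if "x \<in> {0..1}" for x
    using mesh_cell_le[OF that] by (intro member_le_sum) auto
qed

lemma pw_slope_mesh_step: "pw_slope c N = (\<lambda>x. (\<lambda>k. real N * (c (Suc k) - c k)) (mesh_cell N x))"
  by (simp add: pw_slope_def[abs_def])

lemma L2_pw_slope: "0 < N \<Longrightarrow> L2 (pw_slope c N)"
  unfolding pw_slope_mesh_step by (rule L2_mesh_step)

lemma H01_pair_L2_deriv: "H01_pair \<phi> d \<Longrightarrow> L2 d"
  unfolding H01_pair_def L2_def by auto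

lemma H01_pair_integrable_deriv: "H01_pair \<phi> d \<Longrightarrow> d integrable_on {0..1}"
  using set_borel_integral_eq_integral(1)[OF L2_set_integrable[OF H01_pair_L2_deriv]] .

lemma set_integral_initial_eq_integral:
  assumes "L2 d" "x \<in> {0..1}"
  shows "(LINT y:{0..x}|lborel. d y) = integral {0..x} d"
  using assms by (intro set_borel_integral_eq_integral set_integrable_subset[OF L2_set_integrable]) auto

lemma H01_pair_eq_integral:
  "H01_pair \<phi> d \<Longrightarrow> x \<in> {0..1} \<Longrightarrow> \<phi> x = integral {0..x} d"
  using set_integral_initial_eq_integral[OF H01_pair_L2_deriv] unfolding H01_pair_def by auto

lemma H01_pair_boundary: "H01_pair \<phi> d \<Longrightarrow> \<phi> 0 = 0 \<and> \<phi> 1 = 0"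
  using H01_pair_eq_integral[of \<phi> d 0] unfolding H01_pair_def by simp

lemma H01_pair_L2: assumes "H01_pair \<phi> d" shows "L2 \<phi>"
proof -
  have "continuous_on {0..1} (\<lambda>x. integral {0..x} d)"
    by (rule indefinite_integral_continuous_1[OF H01_pair_integrable_deriv[OF assms]])
  then have c: "continuous_on {0..1} \<phi>"
    by (rule continuous_on_eq) (use H01_pair_eq_integral[OF assms] in auto)
  have "set_borel_measurable lborel {0..1} \<phi>"
    unfolding set_borel_measurable_def using borel_measurable_continuous_on_indicator[OF _ c] by simp
  moreover have "set_integrable lborel {0..1} (\<lambda>x. (\<phi> x)\<^sup>2)"
    unfolding set_integrable_def by (rule borel_integrable_compact) (use continuous_on_power[OF c, of 2] in auto)
  ultimately show "L2 \<phi>" unfolding L2_def by simp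
qed

lemma H01_pairI:
  assumes "L2 d" "\<And>x. x \<in> {0..1} \<Longrightarrow> \<phi> x = integral {0..x} d" "\<phi> 1 = 0"
  shows "H01_pair \<phi> d"
  using assms set_integral_initial_eq_integral[OF assms(1)] unfolding H01_pair_def L2_def by auto

lemma H01_pair_diff:
  assumes "H01_pair a da" "H01_pair b db"
  shows "H01_pair (\<lambda>x. a x - b x) (\<lambda>x. da x - db x)"
proof (rule H01_pairI)
  show "L2 (\<lambda>x. da x - db x)" using assms by (intro L2_diff H01_pair_L2_deriv)
  show "a x - b x = integral {0..x} (\<lambda>x. da x - db x)" if "x \<in> {0..1}" for x
  proof -
    have "{0..x} \<subseteq> {0..1}" using that by auto
    then show ?thesis using that assms
      by (simp add: H01_pair_eq_integral integral_diff integrable_on_subinterval[OF H01_pair_integrable_deriv])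
  qed
qed (use H01_pair_boundary[OF assms(1)] H01_pair_boundary[OF assms(2)] in simp)

lemma H01_pair_pw_linear:
  assumes N: "0 < N" and c: "c 0 = 0" "c N = 0"
  shows "H01_pair (pw_linear c N) (pw_slope c N)"
proof (rule H01_pairI[OF L2_pw_slope[OF N]])
  show "pw_linear c N x = integral {0..x} (pw_slope c N)" if "x \<in> {0..1}" for x
    using pw_slope_has_integral[OF N, of x c] that c by (simp add: integral_unique)
  show "pw_linear c N 1 = 0" using pw_linear_node[OF N, of c N] N c by simp
qed

text \<open>A consequence of the Lebesgue differentiation theorem.\<close>
lemma primitive_eq_0_imp_negligible:
  fixes g :: "real \<Rightarrow> real"
  assumes g: "g integrable_on {0..1}" and zero: "\<And>x. x \<in> {0..1} \<Longrightarrow> integral {0..x} g = 0"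
  obtains S where "negligible S" "\<And>x. x \<in> {0..1} - S \<Longrightarrow> g x = 0"
proof -
  define G where "G x = (if x \<in> {0..1} then g x else 0)" for x
  have "G integrable_on cbox a b" for a b
    unfolding G_def integrable_restrict_Int cbox_interval Int_atLeastAtMost
    by (rule integrable_on_subinterval[OF g]) auto
  then obtain S where S: "negligible S"
    and lim: "\<And>x e. x \<notin> S \<Longrightarrow> 0 < e \<Longrightarrow> \<exists>d>0. \<forall>h. 0 < h \<and> h < d \<longrightarrow>
        norm (integral (cbox x (x + h *\<^sub>R One)) G /\<^sub>R h ^ DIM(real) - G x) < e"
    by (rule integrable_ccontinuous_explicit) blast
  show thesis
  proof (rule that[of "insert 1 S"])
    show "negligible (insert 1 S)" using S by simp
    fix x assume x: "x \<in> {0..1} - insert 1 S"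
    have "\<bar>g x\<bar> < e" if e: "0 < e" for e
    proof -
      obtain d where d: "0 < d" and dh: "\<And>h. 0 < h \<Longrightarrow> h < d \<Longrightarrow>
          norm (integral (cbox x (x + h *\<^sub>R One)) G /\<^sub>R h ^ DIM(real) - G x) < e"
        using lim[OF _ e] x by blast
      define h where "h = min (d / 2) (1 - x)"
      have h: "0 < h" "h < d" "x + h \<le> 1" using d x by (auto simp: h_def)
      have "integral {x..x + h} G = integral {x..x + h} g"
        using x h by (intro integral_cong) (auto simp: G_def)
      also have "\<dots> = integral {0..x + h} g - integral {0..x} g"
      proof -
        have "integral {0..x} g + integral {x..x + h} g = integral {0..x + h} g"
          using x h by (intro Henstock_Kurzweil_Integration.integral_combine integrable_on_subinterval[OF g]) auto
        then show ?thesis by simp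
      qed
      also have "\<dots> = 0" using x h zero by simp
      finally show ?thesis using dh[OF h(1,2)] x by (simp add: G_def)
    qed
    then show "g x = 0" by (metis abs_le_zero_iff less_irrefl not_le)
  qed
qed

lemma H01_pair_deriv_unique:
  assumes "H01_pair a da" "H01_pair b db" "\<And>x. x \<in> {0..1} \<Longrightarrow> a x = b x"
  obtains S where "negligible S" "\<And>x. x \<in> {0..1} - S \<Longrightarrow> da x = db x"
proof -
  have H: "H01_pair (\<lambda>x. a x - b x) (\<lambda>x. da x - db x)" by (rule H01_pair_diff[OF assms(1,2)])
  obtain S where "negligible S" "\<And>x. x \<in> {0..1} - S \<Longrightarrow> da x - db x = 0"
    by (rule primitive_eq_0_imp_negligible[OF H01_pair_integrable_deriv[OF H]])
      (use H01_pair_eq_integral[OF H] assms(3) in auto)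
  then show thesis using that by auto
qed

definition L2_inner :: "(real \<Rightarrow> real) \<Rightarrow> (real \<Rightarrow> real) \<Rightarrow> real" where
  "L2_inner a b = integral {0..1} (\<lambda>x. a x * b x)"

lemma L2_inner_commute: "L2_inner a b = L2_inner b a"
  by (simp add: L2_inner_def mult.commute)

lemma L2_inner_add_left:
  "L2 a \<Longrightarrow> L2 b \<Longrightarrow> L2 c \<Longrightarrow> L2_inner (\<lambda>x. a x + b x) c = L2_inner a c + L2_inner b c"
  unfolding L2_inner_def by (simp add: distrib_right integral_add L2_mult_integrable_on)

lemma L2_inner_add_right:
  "L2 a \<Longrightarrow> L2 b \<Longrightarrow> L2 c \<Longrightarrow> L2_inner c (\<lambda>x. a x + b x) = L2_inner c a + L2_inner c b"
  using L2_inner_add_left[of a b c] by (simp add: L2_inner_commute)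

lemma L2_inner_diff_left:
  "L2 a \<Longrightarrow> L2 b \<Longrightarrow> L2 c \<Longrightarrow> L2_inner (\<lambda>x. a x - b x) c = L2_inner a c - L2_inner b c"
  unfolding L2_inner_def by (simp add: left_diff_distrib integral_diff L2_mult_integrable_on)

lemma L2_inner_cong:
  assumes "negligible S" "\<And>x. x \<in> {0..1} - S \<Longrightarrow> a x = a' x"
  shows "L2_inner a b = L2_inner a' b"
  unfolding L2_inner_def using assms by (intro integral_spike[of S]) auto

lemma L2_inner_nonneg: "L2 a \<Longrightarrow> 0 \<le> L2_inner a a"
  unfolding L2_inner_def by (rule integral_nonneg) (auto simp: L2_mult_integrable_on)

lemma L2_inner_young:
  assumes "L2 a" "L2 b" "0 < l"
  shows "c * L2_inner a b \<le> c\<^sup>2 * L2_inner a a / (2 * l) + l / 2 * L2_inner b b"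
proof -
  have "c * L2_inner a b = integral {0..1} (\<lambda>x. c * (a x * b x))"
    unfolding L2_inner_def by simp
  also have "\<dots> \<le> integral {0..1} (\<lambda>x. c\<^sup>2 / (2 * l) * (a x * a x) + l / 2 * (b x * b x))"
  proof (rule integral_le)
    fix x
    have "0 \<le> (c * a x - l * b x)\<^sup>2" by simp
    then show "c * (a x * b x) \<le> c\<^sup>2 / (2 * l) * (a x * a x) + l / 2 * (b x * b x)"
      using assms(3) by (simp add: power2_eq_square field_simps)
  qed (use assms in \<open>auto intro!: integrable_add integrable_on_mult_right L2_mult_integrable_on\<close>)
  also have "\<dots> = c\<^sup>2 * L2_inner a a / (2 * l) + l / 2 * L2_inner b b"
    using assms unfolding L2_inner_def
    by (simp add: integral_add integrable_on_mult_right L2_mult_integrable_on)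
  finally show ?thesis .
qed

lemma L2_inner_diff_self_le:
  assumes "L2 a" "L2 b"
  shows "L2_inner (\<lambda>x. a x - b x) (\<lambda>x. a x - b x) \<le> 2 * L2_inner a a + 2 * L2_inner b b"
proof -
  have "L2_inner (\<lambda>x. a x - b x) (\<lambda>x. a x - b x)
      \<le> integral {0..1} (\<lambda>x. 2 * (a x * a x) + 2 * (b x * b x))"
    unfolding L2_inner_def
  proof (rule integral_le)
    fix x
    have "0 \<le> (a x + b x)\<^sup>2" by simp
    then show "(a x - b x) * (a x - b x) \<le> 2 * (a x * a x) + 2 * (b x * b x)"
      by (simp add: power2_eq_square algebra_simps)
  qed (use assms in \<open>auto intro!: integrable_add integrable_on_mult_right L2_mult_integrable_on L2_diff\<close>)
  also have "\<dots> = 2 * L2_inner a a + 2 * L2_inner b b"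
    using assms unfolding L2_inner_def
    by (simp add: integral_add integrable_on_mult_right L2_mult_integrable_on)
  finally show ?thesis .
qed

lemma L2_inner_le_bound:
  assumes "L2 f" "\<And>x. x \<in> {0..1} \<Longrightarrow> \<bar>f x\<bar> \<le> B"
  shows "L2_inner f f \<le> B\<^sup>2"
proof -
  have "L2_inner f f \<le> integral {0..1::real} (\<lambda>x. B\<^sup>2)"
    unfolding L2_inner_def
  proof (rule integral_le)
    show "f x * f x \<le> B\<^sup>2" if "x \<in> {0..1}" for x
      using power_mono[OF assms(2)[OF that] abs_ge_zero, of 2] by (simp add: power2_eq_square)
  qed (use L2_mult_integrable_on[OF assms(1,1)] in auto)
  then show ?thesis by simp
qed

lemma H01_norm_eq_L2_inner: "L2 d \<Longrightarrow> H01_norm d = sqrt (L2_inner d d)"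
  unfolding H01_norm_def L2_inner_def using L2_set_integral_mult[of d d] by (simp add: power2_eq_square)

section \<open>The Galerkin error estimate\<close>

locale galerkin_pair =
  fixes N :: nat and \<gamma> \<beta> :: real and f h :: "real \<Rightarrow> real" and hc :: "nat \<Rightarrow> real"
    and vb dvb vh dvh :: "real \<Rightarrow> real"
  assumes N_pos: "0 < N" and \<gamma>_pos: "0 < \<gamma>" and f_L2: "L2 f"
    and h_mesh_step: "\<And>x. x \<in> {0..1} \<Longrightarrow> h x = hc (mesh_cell N x)"
    and vb_H01: "H01_pair vb dvb"
    and vh_H01: "H01_pair vh dvh" and vh_Vh: "Vh N vh"
    and vb_eq: "\<And>\<phi> d\<phi>. H01_pair \<phi> d\<phi> \<Longrightarrow>
      \<gamma> * L2_inner dvb d\<phi> + L2_inner vb \<phi> = L2_inner f \<phi> - \<beta> * L2_inner h d\<phi>"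
    and vh_eq: "\<And>\<phi> d\<phi>. Vh N \<phi> \<Longrightarrow> H01_pair \<phi> d\<phi> \<Longrightarrow>
      \<gamma> * L2_inner dvh d\<phi> + L2_inner vh \<phi> = L2_inner f \<phi> - \<beta> * L2_inner h d\<phi>"
begin

definition vb_nodes :: "nat \<Rightarrow> real" where "vb_nodes j = vb (real j / real N)"
definition vh_nodes :: "nat \<Rightarrow> real" where "vh_nodes j = vh (real j / real N)"

definition \<eta> :: "real \<Rightarrow> real" where "\<eta> x = vb x - pw_linear vb_nodes N x"
definition d\<eta> :: "real \<Rightarrow> real" where "d\<eta> x = dvb x - pw_slope vb_nodes N x"
definition \<theta> :: "real \<Rightarrow> real" where "\<theta> = pw_linear (\<lambda>j. vb_nodes j - vh_nodes j) N"
definition d\<theta> :: "real \<Rightarrow> real" where "d\<theta> = pw_slope (\<lambda>j. vb_nodes j - vh_nodes j) N"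

lemma nodes_boundary: "vb_nodes 0 = 0" "vb_nodes N = 0" "vh_nodes 0 = 0" "vh_nodes N = 0"
  using H01_pair_boundary[OF vb_H01] H01_pair_boundary[OF vh_H01] N_pos
  by (simp_all add: vb_nodes_def vh_nodes_def)

lemma \<eta>_H01: "H01_pair \<eta> d\<eta>"
  unfolding \<eta>_def[abs_def] d\<eta>_def[abs_def]
  using H01_pair_diff[OF vb_H01 H01_pair_pw_linear[OF N_pos nodes_boundary(1,2)]] .

lemma \<eta>_nodes: "\<eta> (real j / real N) = 0"
  using pw_linear_node[OF N_pos] by (simp add: \<eta>_def vb_nodes_def)

lemma \<theta>_H01: "H01_pair \<theta> d\<theta>"
  unfolding \<theta>_def d\<theta>_def by (rule H01_pair_pw_linear[OF N_pos]) (simp_all add: nodes_boundary)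

lemma \<theta>_Vh: "Vh N \<theta>"
  unfolding \<theta>_def by (rule pw_linear_Vh[OF N_pos]) (simp_all add: nodes_boundary)

lemma h_L2: "L2 h"
  using L2_cong[OF L2_mesh_step[OF N_pos, of hc]] h_mesh_step by simp

lemmas vb_L2 = H01_pair_L2[OF vb_H01] and dvb_L2 = H01_pair_L2_deriv[OF vb_H01]
  and vh_L2 = H01_pair_L2[OF vh_H01] and dvh_L2 = H01_pair_L2_deriv[OF vh_H01]
  and \<eta>_L2 = H01_pair_L2[OF \<eta>_H01] and d\<eta>_L2 = H01_pair_L2_deriv[OF \<eta>_H01]
  and \<theta>_L2 = H01_pair_L2[OF \<theta>_H01] and d\<theta>_L2 = H01_pair_L2_deriv[OF \<theta>_H01]

lemma error_eq: "x \<in> {0..1} \<Longrightarrow> vb x - vh x = \<eta> x + \<theta> x"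
  using Vh_imp_pw_linear[OF vh_Vh N_pos]
  by (simp add: \<eta>_def \<theta>_def pw_linear_diff vh_nodes_def)

lemma deriv_error_eq:
  obtains S where "negligible S" "\<And>x. x \<in> {0..1} - S \<Longrightarrow> dvb x - dvh x = d\<eta> x + d\<theta> x"
proof -
  have "vh x = pw_linear vh_nodes N x" if "x \<in> {0..1}" for x
    using Vh_imp_pw_linear[OF vh_Vh N_pos that] by (simp add: vh_nodes_def[abs_def])
  then obtain S where S: "negligible S" "\<And>x. x \<in> {0..1} - S \<Longrightarrow> dvh x = pw_slope vh_nodes N x"
    using H01_pair_deriv_unique[OF vh_H01 H01_pair_pw_linear[OF N_pos nodes_boundary(3,4)]] by blast
  show thesis
    by (rule that[OF S(1)]) (use S(2) in \<open>simp add: d\<eta>_def d\<theta>_def pw_slope_diff\<close>)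
qed

text \<open>In one dimension the nodal interpolant is the \<open>H\<^sup>1\<close>-projection onto \<open>V\<^sub>h\<close>.\<close>
lemma mesh_step_orth_d\<eta>: "L2_inner (\<lambda>x. G (mesh_cell N x)) d\<eta> = 0"
  unfolding L2_inner_def
  using integral_mesh_step_mult_eq_0[OF N_pos H01_pair_integrable_deriv[OF \<eta>_H01]
      H01_pair_eq_integral[OF \<eta>_H01] \<eta>_nodes L2_mult_integrable_on[OF L2_mesh_step[OF N_pos] d\<eta>_L2]] .

lemma h_orth_d\<eta>: "L2_inner h d\<eta> = 0"
  using mesh_step_orth_d\<eta> L2_inner_cong[of "{}" h] h_mesh_step by auto

lemma pw_slope_orth_d\<eta>: "L2_inner (pw_slope c N) d\<eta> = 0"
  unfolding pw_slope_mesh_step by (rule mesh_step_orth_d\<eta>)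

lemma energy_estimate: "L2_inner vb vb \<le> L2_inner f f + \<beta>\<^sup>2 / \<gamma> * L2_inner h h"
proof -
  have "\<gamma> * L2_inner dvb dvb + L2_inner vb vb = 1 * L2_inner f vb + (- \<beta>) * L2_inner h dvb"
    using vb_eq[OF vb_H01] by simp
  also have "\<dots> \<le> (L2_inner f f / 2 + L2_inner vb vb / 2)
      + (\<beta>\<^sup>2 * L2_inner h h / (2 * \<gamma>) + \<gamma> / 2 * L2_inner dvb dvb)"
    using L2_inner_young[OF f_L2 vb_L2, of 1 1] L2_inner_young[OF h_L2 dvb_L2 \<gamma>_pos, of "- \<beta>"]
    by (intro add_mono) simp_all
  finally have "L2_inner vb vb / 2 \<le> L2_inner f f / 2 + \<beta>\<^sup>2 * L2_inner h h / (2 * \<gamma>)"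
    using mult_nonneg_nonneg[OF less_imp_le[OF \<gamma>_pos] L2_inner_nonneg[OF dvb_L2]] by simp
  moreover have "2 * (\<beta>\<^sup>2 * L2_inner h h / (2 * \<gamma>)) = \<beta>\<^sup>2 / \<gamma> * L2_inner h h" by simp
  ultimately show ?thesis by linarith
qed

lemma \<eta>_poincare: "L2_inner \<eta> \<eta> \<le> L2_inner d\<eta> d\<eta> / (real N)\<^sup>2"
  using poincare_mesh[OF N_pos H01_pair_integrable_deriv[OF \<eta>_H01]
      L2_square_integrable_on[OF d\<eta>_L2] L2_square_integrable_on[OF \<eta>_L2]
      H01_pair_eq_integral[OF \<eta>_H01] \<eta>_nodes]
  unfolding L2_inner_def by (simp add: power2_eq_square)

lemma d\<eta>_estimate: "L2_inner d\<eta> d\<eta> \<le> 2 * (L2_inner f f + L2_inner vb vb) / (\<gamma>\<^sup>2 * (real N)\<^sup>2)"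
proof -
  define l where "l = \<gamma> * (real N)\<^sup>2"
  have l: "0 < l" using \<gamma>_pos N_pos by (simp add: l_def)
  have "L2_inner dvb d\<eta> = L2_inner (\<lambda>x. d\<eta> x + pw_slope vb_nodes N x) d\<eta>"
    by (simp add: d\<eta>_def)
  also have "\<dots> = L2_inner d\<eta> d\<eta>"
    using L2_inner_add_left[OF d\<eta>_L2 L2_pw_slope[OF N_pos, of vb_nodes] d\<eta>_L2] pw_slope_orth_d\<eta> by simp
  finally have "\<gamma> * L2_inner d\<eta> d\<eta> = 1 * L2_inner (\<lambda>x. f x - vb x) \<eta>"
    using vb_eq[OF \<eta>_H01] h_orth_d\<eta> L2_inner_diff_left[OF f_L2 vb_L2 \<eta>_L2] by simp
  also have "\<dots> \<le> L2_inner (\<lambda>x. f x - vb x) (\<lambda>x. f x - vb x) / (2 * l) + l / 2 * L2_inner \<eta> \<eta>"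
    using L2_inner_young[OF L2_diff[OF f_L2 vb_L2] \<eta>_L2 l, of 1] by simp
  also have "\<dots> \<le> (2 * L2_inner f f + 2 * L2_inner vb vb) / (2 * l) + \<gamma> / 2 * L2_inner d\<eta> d\<eta>"
  proof (rule add_mono)
    show "L2_inner (\<lambda>x. f x - vb x) (\<lambda>x. f x - vb x) / (2 * l)
        \<le> (2 * L2_inner f f + 2 * L2_inner vb vb) / (2 * l)"
      using L2_inner_diff_self_le[OF f_L2 vb_L2] l by (simp add: divide_right_mono)
    show "l / 2 * L2_inner \<eta> \<eta> \<le> \<gamma> / 2 * L2_inner d\<eta> d\<eta>"
      using mult_left_mono[OF \<eta>_poincare, of "l / 2"] l N_pos by (simp add: l_def)
  qed
  finally show ?thesis using \<gamma>_pos N_pos by (simp add: l_def field_simps power2_eq_square)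
qed

lemma d\<theta>_estimate: "L2_inner d\<theta> d\<theta> \<le> L2_inner d\<eta> d\<eta> / (2 * \<gamma> * (real N)\<^sup>2)"
proof -
  obtain S where S: "negligible S" "\<And>x. x \<in> {0..1} - S \<Longrightarrow> dvb x - dvh x = d\<eta> x + d\<theta> x"
    using deriv_error_eq by blast
  have "\<gamma> * L2_inner (\<lambda>x. dvb x - dvh x) d\<theta> + L2_inner (\<lambda>x. vb x - vh x) \<theta>
      = (\<gamma> * L2_inner dvb d\<theta> + L2_inner vb \<theta>) - (\<gamma> * L2_inner dvh d\<theta> + L2_inner vh \<theta>)"
    using L2_inner_diff_left[OF dvb_L2 dvh_L2 d\<theta>_L2] L2_inner_diff_left[OF vb_L2 vh_L2 \<theta>_L2]
    by (simp add: right_diff_distrib)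
  also have "\<dots> = 0" using vb_eq[OF \<theta>_H01] vh_eq[OF \<theta>_Vh \<theta>_H01] by simp
  finally have "\<gamma> * L2_inner (\<lambda>x. dvb x - dvh x) d\<theta> + L2_inner (\<lambda>x. vb x - vh x) \<theta> = 0" .
  moreover have "L2_inner (\<lambda>x. dvb x - dvh x) d\<theta> = L2_inner d\<eta> d\<theta> + L2_inner d\<theta> d\<theta>"
    using L2_inner_cong[OF S(1), of "\<lambda>x. dvb x - dvh x" "\<lambda>x. d\<eta> x + d\<theta> x" d\<theta>] S(2)
      L2_inner_add_left[OF d\<eta>_L2 d\<theta>_L2 d\<theta>_L2] by simp
  moreover have "L2_inner d\<eta> d\<theta> = 0"
    using pw_slope_orth_d\<eta> L2_inner_commute by (metis d\<theta>_def)
  moreover have "L2_inner (\<lambda>x. vb x - vh x) \<theta> = L2_inner \<eta> \<theta> + L2_inner \<theta> \<theta>"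
    using L2_inner_cong[of "{}" "\<lambda>x. vb x - vh x" "\<lambda>x. \<eta> x + \<theta> x" \<theta>] error_eq
      L2_inner_add_left[OF \<eta>_L2 \<theta>_L2 \<theta>_L2] by simp
  ultimately have "\<gamma> * L2_inner d\<theta> d\<theta> + L2_inner \<theta> \<theta> = (- 1) * L2_inner \<eta> \<theta>"
    by simp
  also have "\<dots> \<le> L2_inner \<eta> \<eta> / 2 + L2_inner \<theta> \<theta> / 2"
    using L2_inner_young[OF \<eta>_L2 \<theta>_L2, of 1 "- 1"] by simp
  finally have "\<gamma> * L2_inner d\<theta> d\<theta> \<le> L2_inner d\<eta> d\<eta> / (real N)\<^sup>2 / 2"
    using L2_inner_nonneg[OF \<theta>_L2] \<eta>_poincare by simp
  then show ?thesis
    using \<gamma>_pos N_pos by (simp add: field_simps)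
qed

lemma deriv_error_pythagoras:
  "L2_inner (\<lambda>x. dvb x - dvh x) (\<lambda>x. dvb x - dvh x) = L2_inner d\<eta> d\<eta> + L2_inner d\<theta> d\<theta>"
proof -
  obtain S where S: "negligible S" "\<And>x. x \<in> {0..1} - S \<Longrightarrow> dvb x - dvh x = d\<eta> x + d\<theta> x"
    using deriv_error_eq by blast
  have "L2_inner (\<lambda>x. dvb x - dvh x) (\<lambda>x. dvb x - dvh x)
      = L2_inner (\<lambda>x. d\<eta> x + d\<theta> x) (\<lambda>x. dvb x - dvh x)"
    by (rule L2_inner_cong[OF S(1)]) (rule S(2))
  also have "\<dots> = L2_inner (\<lambda>x. dvb x - dvh x) (\<lambda>x. d\<eta> x + d\<theta> x)"
    by (rule L2_inner_commute)
  also have "\<dots> = L2_inner (\<lambda>x. d\<eta> x + d\<theta> x) (\<lambda>x. d\<eta> x + d\<theta> x)"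
    by (rule L2_inner_cong[OF S(1)]) (rule S(2))
  also have "\<dots> = L2_inner d\<eta> d\<eta> + 2 * L2_inner d\<theta> d\<eta> + L2_inner d\<theta> d\<theta>"
    using d\<eta>_L2 d\<theta>_L2
    by (simp add: L2_inner_add_left L2_inner_add_right L2_add L2_inner_commute[of d\<eta> d\<theta>])
  also have "L2_inner d\<theta> d\<eta> = 0" using pw_slope_orth_d\<eta> by (simp add: d\<theta>_def)
  finally show ?thesis by simp
qed

theorem galerkin_error_bound:
  "L2_inner (\<lambda>x. dvb x - dvh x) (\<lambda>x. dvb x - dvh x)
     \<le> (1 + 1 / (2 * \<gamma> * (real N)\<^sup>2))
        * (2 * (2 * L2_inner f f + \<beta>\<^sup>2 / \<gamma> * L2_inner h h) / (\<gamma>\<^sup>2 * (real N)\<^sup>2))"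
proof -
  have "L2_inner d\<eta> d\<eta> \<le> 2 * (2 * L2_inner f f + \<beta>\<^sup>2 / \<gamma> * L2_inner h h) / (\<gamma>\<^sup>2 * (real N)\<^sup>2)"
  proof -
    have "2 * (L2_inner f f + L2_inner vb vb) \<le> 2 * (2 * L2_inner f f + \<beta>\<^sup>2 / \<gamma> * L2_inner h h)"
      using energy_estimate by simp
    then have "2 * (L2_inner f f + L2_inner vb vb) / (\<gamma>\<^sup>2 * (real N)\<^sup>2)
        \<le> 2 * (2 * L2_inner f f + \<beta>\<^sup>2 / \<gamma> * L2_inner h h) / (\<gamma>\<^sup>2 * (real N)\<^sup>2)"
      by (rule divide_right_mono) simp
    with d\<eta>_estimate show ?thesis by (rule order_trans)
  qed
  moreover have "L2_inner (\<lambda>x. dvb x - dvh x) (\<lambda>x. dvb x - dvh x)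
      \<le> (1 + 1 / (2 * \<gamma> * (real N)\<^sup>2)) * L2_inner d\<eta> d\<eta>"
    using deriv_error_pythagoras d\<theta>_estimate by (simp add: algebra_simps)
  moreover have "0 \<le> 1 + 1 / (2 * \<gamma> * (real N)\<^sup>2)" using \<gamma>_pos by simp
  ultimately show ?thesis by (meson order_trans mult_left_mono)
qed

end

definition error_constant :: "real \<Rightarrow> real \<Rightarrow> real \<Rightarrow> real \<Rightarrow> real" where
  "error_constant CFL \<epsilon>0 Fc Hc
     = 2 * (2 * Fc\<^sup>2 + Hc\<^sup>2) / (CFL\<^sup>2 * (1 - \<epsilon>0) ^ 4) * (1 + 1 / (2 * (1 - \<epsilon>0)\<^sup>2 * CFL\<^sup>2))"

lemma error_constant_nonneg: "0 \<le> error_constant CFL \<epsilon>0 Fc Hc"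
  unfolding error_constant_def by (intro mult_nonneg_nonneg divide_nonneg_nonneg add_nonneg_nonneg) auto

lemma gamma_coef_scaling:
  assumes \<epsilon>: "0 < \<epsilon>" "\<epsilon> < 1" and dt: "0 < dt" and Nr: "dt * Nr = CFL"
  shows "gamma_coef \<epsilon> dt * Nr\<^sup>2 = (1 - \<epsilon>)\<^sup>2 * CFL\<^sup>2 / \<epsilon>\<^sup>2"
    and "(gamma_coef \<epsilon> dt)\<^sup>2 * Nr\<^sup>2 = (1 - \<epsilon>) ^ 4 * CFL\<^sup>2 * dt\<^sup>2 / \<epsilon> ^ 4"
    and "(dt\<^sup>2 * (1 - \<epsilon>))\<^sup>2 / gamma_coef \<epsilon> dt = \<epsilon>\<^sup>2 * dt\<^sup>2"
proof -
  define w where "w = 1 - \<epsilon>"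
  have w: "0 < w" using \<epsilon> by (simp add: w_def)
  have \<gamma>: "gamma_coef \<epsilon> dt = dt\<^sup>2 * w\<^sup>2 / \<epsilon>\<^sup>2" by (simp add: gamma_coef_def w_def)
  show \<gamma>N: "gamma_coef \<epsilon> dt * Nr\<^sup>2 = (1 - \<epsilon>)\<^sup>2 * CFL\<^sup>2 / \<epsilon>\<^sup>2"
    unfolding \<gamma> Nr[symmetric] w_def[symmetric] by (simp add: power_mult_distrib)
  have "(gamma_coef \<epsilon> dt)\<^sup>2 * Nr\<^sup>2 = gamma_coef \<epsilon> dt * (gamma_coef \<epsilon> dt * Nr\<^sup>2)"
    by (simp add: power2_eq_square)
  also have "\<dots> = dt\<^sup>2 * w\<^sup>2 / \<epsilon>\<^sup>2 * (w\<^sup>2 * CFL\<^sup>2 / \<epsilon>\<^sup>2)" unfolding \<gamma>N by (simp add: \<gamma> w_def)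
  finally show "(gamma_coef \<epsilon> dt)\<^sup>2 * Nr\<^sup>2 = (1 - \<epsilon>) ^ 4 * CFL\<^sup>2 * dt\<^sup>2 / \<epsilon> ^ 4"
    unfolding w_def by (simp add: power4_eq_xxxx power2_eq_square mult_ac)
  show "(dt\<^sup>2 * (1 - \<epsilon>))\<^sup>2 / gamma_coef \<epsilon> dt = \<epsilon>\<^sup>2 * dt\<^sup>2"
    using \<epsilon> dt w unfolding \<gamma> w_def[symmetric] by (simp add: field_simps power2_eq_square)
qed

lemma mesh_factor_bound:
  assumes \<epsilon>: "0 < \<epsilon>" "\<epsilon> \<le> \<epsilon>0" "\<epsilon>0 < 1" and CFL: "0 < CFL" and dt: "0 < dt" and Nr: "dt * Nr = CFL"
  shows "1 + 1 / (2 * gamma_coef \<epsilon> dt * Nr\<^sup>2) \<le> 1 + 1 / (2 * (1 - \<epsilon>0)\<^sup>2 * CFL\<^sup>2)"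
proof -
  have "(1 - \<epsilon>0)\<^sup>2 * CFL\<^sup>2 \<le> (1 - \<epsilon>)\<^sup>2 * CFL\<^sup>2" using \<epsilon> by (intro mult_right_mono power_mono) auto
  also have "\<dots> \<le> (1 - \<epsilon>)\<^sup>2 * CFL\<^sup>2 / \<epsilon>\<^sup>2"
    using \<epsilon> by (simp add: le_divide_eq power_le_one mult_left_le)
  finally have "(1 - \<epsilon>0)\<^sup>2 * CFL\<^sup>2 \<le> (1 - \<epsilon>)\<^sup>2 * CFL\<^sup>2 / \<epsilon>\<^sup>2" .
  moreover have "0 < (1 - \<epsilon>0)\<^sup>2 * CFL\<^sup>2" using \<epsilon> CFL by simp
  ultimately have "1 / (2 * ((1 - \<epsilon>)\<^sup>2 * CFL\<^sup>2 / \<epsilon>\<^sup>2)) \<le> 1 / (2 * ((1 - \<epsilon>0)\<^sup>2 * CFL\<^sup>2))"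
    by (intro divide_left_mono mult_left_mono mult_pos_pos) auto
  moreover have "\<epsilon> < 1" using \<epsilon> by simp
  ultimately show ?thesis
    unfolding mult.assoc using gamma_coef_scaling(1)[OF \<epsilon>(1) _ dt Nr] by simp
qed

text \<open>Here \<open>\<beta>\<^sup>2/\<gamma> = \<epsilon>\<^sup>2\<Delta>t\<^sup>2\<close>, and \<open>\<epsilon> \<le> \<Delta>t\<close> absorbs the remaining powers of \<open>\<epsilon>\<close>.\<close>
lemma data_term_bound:
  fixes \<epsilon> \<epsilon>0 dt CFL Nr F H Fc Hc :: real
  assumes \<epsilon>: "0 < \<epsilon>" "\<epsilon> \<le> \<epsilon>0" "\<epsilon>0 < 1" "\<epsilon> \<le> dt" and CFL: "0 < CFL" and Nr: "dt * Nr = CFL"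
    and F: "F \<le> (Fc * \<epsilon>\<^sup>2)\<^sup>2" and H: "0 \<le> H" "H \<le> Hc\<^sup>2"
  shows "2 * (2 * F + (dt\<^sup>2 * (1 - \<epsilon>))\<^sup>2 / gamma_coef \<epsilon> dt * H) / ((gamma_coef \<epsilon> dt)\<^sup>2 * Nr\<^sup>2)
      \<le> 2 * (2 * Fc\<^sup>2 + Hc\<^sup>2) / (CFL\<^sup>2 * (1 - \<epsilon>0) ^ 4) * (\<epsilon>\<^sup>2 * dt)\<^sup>2"
proof -
  define q where "q = (1 - \<epsilon>0) ^ 4"
  have dt: "0 < dt" using \<epsilon> by simp
  have q: "0 < q" "q \<le> (1 - \<epsilon>) ^ 4" using \<epsilon> by (auto simp: q_def intro: power_mono)
  note scaling = gamma_coef_scaling[of \<epsilon>, OF _ _ dt Nr]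
  have "2 * F + \<epsilon>\<^sup>2 * dt\<^sup>2 * H \<le> (2 * Fc\<^sup>2 + Hc\<^sup>2) * dt ^ 4"
  proof -
    have "(Fc * \<epsilon>\<^sup>2)\<^sup>2 = Fc\<^sup>2 * \<epsilon> ^ 4" by (simp add: power_mult_distrib flip: power_mult)
    moreover have "Fc\<^sup>2 * \<epsilon> ^ 4 \<le> Fc\<^sup>2 * dt ^ 4"
      using \<epsilon> by (intro mult_left_mono power_mono) auto
    ultimately have "F \<le> Fc\<^sup>2 * dt ^ 4" using F by simp
    moreover have "\<epsilon>\<^sup>2 * dt\<^sup>2 * H \<le> dt\<^sup>2 * dt\<^sup>2 * Hc\<^sup>2"
      using H power_mono[OF \<epsilon>(4), of 2] \<epsilon>(1) by (intro mult_mono) auto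
    ultimately show ?thesis by (simp add: algebra_simps power4_eq_xxxx power2_eq_square)
  qed
  then have "2 * (2 * F + \<epsilon>\<^sup>2 * dt\<^sup>2 * H) * \<epsilon> ^ 4 / ((1 - \<epsilon>) ^ 4 * CFL\<^sup>2 * dt\<^sup>2)
      \<le> 2 * ((2 * Fc\<^sup>2 + Hc\<^sup>2) * dt ^ 4) * \<epsilon> ^ 4 / (q * CFL\<^sup>2 * dt\<^sup>2)"
    using q CFL dt \<epsilon> by (intro frac_le mult_right_mono mult_left_mono) auto
  moreover have "2 * (2 * F + (dt\<^sup>2 * (1 - \<epsilon>))\<^sup>2 / gamma_coef \<epsilon> dt * H) / ((gamma_coef \<epsilon> dt)\<^sup>2 * Nr\<^sup>2)
      = 2 * (2 * F + \<epsilon>\<^sup>2 * dt\<^sup>2 * H) * \<epsilon> ^ 4 / ((1 - \<epsilon>) ^ 4 * CFL\<^sup>2 * dt\<^sup>2)"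
    using \<epsilon> by (simp add: scaling(2,3))
  moreover have "2 * ((2 * Fc\<^sup>2 + Hc\<^sup>2) * dt ^ 4) * \<epsilon> ^ 4 / (q * CFL\<^sup>2 * dt\<^sup>2)
      = 2 * (2 * Fc\<^sup>2 + Hc\<^sup>2) / (CFL\<^sup>2 * q) * (\<epsilon>\<^sup>2 * dt)\<^sup>2"
    using q CFL dt by (simp add: field_simps power2_eq_square power4_eq_xxxx)
  ultimately show ?thesis by (simp add: q_def)
qed

lemma galerkin_bound_scaling:
  fixes \<epsilon> \<epsilon>0 dt CFL Nr F H Fc Hc :: real
  assumes \<epsilon>: "0 < \<epsilon>" "\<epsilon> \<le> \<epsilon>0" "\<epsilon>0 < 1" "\<epsilon> \<le> dt" and CFL: "0 < CFL" and Nr: "dt * Nr = CFL"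
    and F: "0 \<le> F" "F \<le> (Fc * \<epsilon>\<^sup>2)\<^sup>2" and H: "0 \<le> H" "H \<le> Hc\<^sup>2"
  shows "(1 + 1 / (2 * gamma_coef \<epsilon> dt * Nr\<^sup>2))
      * (2 * (2 * F + (dt\<^sup>2 * (1 - \<epsilon>))\<^sup>2 / gamma_coef \<epsilon> dt * H) / ((gamma_coef \<epsilon> dt)\<^sup>2 * Nr\<^sup>2))
    \<le> error_constant CFL \<epsilon>0 Fc Hc * (\<epsilon>\<^sup>2 * dt)\<^sup>2"
proof -
  have "0 \<le> 2 * (2 * F + (dt\<^sup>2 * (1 - \<epsilon>))\<^sup>2 / gamma_coef \<epsilon> dt * H) / ((gamma_coef \<epsilon> dt)\<^sup>2 * Nr\<^sup>2)"
    using F H \<epsilon> by (simp add: gamma_coef_scaling(3)[OF _ _ _ Nr])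
  with mesh_factor_bound[OF \<epsilon>(1-3) CFL _ Nr] data_term_bound[OF \<epsilon> CFL Nr F(2) H] \<epsilon>
  have "(1 + 1 / (2 * gamma_coef \<epsilon> dt * Nr\<^sup>2))
      * (2 * (2 * F + (dt\<^sup>2 * (1 - \<epsilon>))\<^sup>2 / gamma_coef \<epsilon> dt * H) / ((gamma_coef \<epsilon> dt)\<^sup>2 * Nr\<^sup>2))
    \<le> (1 + 1 / (2 * (1 - \<epsilon>0)\<^sup>2 * CFL\<^sup>2)) * (2 * (2 * Fc\<^sup>2 + Hc\<^sup>2) / (CFL\<^sup>2 * (1 - \<epsilon>0) ^ 4) * (\<epsilon>\<^sup>2 * dt)\<^sup>2)"
    by (intro mult_mono) auto
  then show ?thesis unfolding error_constant_def by (simp add: mult_ac)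
qed

section \<open>The finite-volume data\<close>

lemma xbar_dist: "xbar dx (i + 1) - xbar dx (i - 1) = 2 * dx"
  "xbar dx (i + 1) - xbar dx i = dx" "xbar dx (i - 1) - xbar dx i = - dx"
  by (simp_all add: xbar_def algebra_simps)

lemma abs_add3_le:
  fixes a b c :: real
  shows "\<bar>a\<bar> \<le> A \<Longrightarrow> \<bar>b\<bar> \<le> B \<Longrightarrow> \<bar>c\<bar> \<le> C \<Longrightarrow> \<bar>a + b + c\<bar> \<le> A + B + C"
  by arith

lemma iota1_bound:
  fixes V U :: "real \<Rightarrow> real \<Rightarrow> real"
  assumes dx: "0 < dx" and dt: "0 < dt" "dt \<le> 1" and L: "0 \<le> L"
    and V: "\<And>y. \<bar>V y (real n * dt)\<bar> \<le> A"
    and U: "\<And>a b. \<bar>U a (real n * dt) - U b (real n * dt)\<bar> \<le> L * \<bar>a - b\<bar>"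
  shows "\<bar>iota1 V U dx dt n x\<bar> \<le> 3 * A + L"
proof -
  define T where "T = real n * dt"
  define i where "i = cell dx x"
  define Vi where "Vi j = V (xbar dx j) T" for j
  define Ui where "Ui j = U (xbar dx j) T" for j
  have eq: "iota1 V U dx dt n x
      = Vi i + dt * ((Ui (i + 1) - Ui (i - 1)) / (2 * dx)) + (Vi (i + 1) + Vi (i - 1) - 2 * Vi i) / 2"
    using dx dt unfolding iota1_def tilde_ux_def Let_def
    by (simp add: i_def T_def Vi_def Ui_def field_simps)
  have dU: "\<bar>dt * ((Ui (i + 1) - Ui (i - 1)) / (2 * dx))\<bar> \<le> L"
  proof -
    have "\<bar>Ui (i + 1) - Ui (i - 1)\<bar> \<le> L * (2 * dx)"
      using U[of "xbar dx (i + 1)" "xbar dx (i - 1)"] dx by (simp add: Ui_def T_def xbar_dist)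
    then have "\<bar>(Ui (i + 1) - Ui (i - 1)) / (2 * dx)\<bar> \<le> L"
      using dx by (simp add: field_simps)
    then have "dt * \<bar>(Ui (i + 1) - Ui (i - 1)) / (2 * dx)\<bar> \<le> 1 * L"
      using dt L by (intro mult_mono) auto
    then show ?thesis using dt by (simp add: abs_mult)
  qed
  have Vi: "\<bar>Vi j\<bar> \<le> A" for j using V by (simp add: Vi_def T_def)
  have dV: "\<bar>(Vi (i + 1) + Vi (i - 1) - 2 * Vi i) / 2\<bar> \<le> 2 * A"
    using Vi[of "i + 1"] Vi[of "i - 1"] Vi[of i] by (auto simp: abs_le_iff)
  show ?thesis using abs_add3_le[OF Vi dU dV] unfolding eq by simp
qed

lemma iota2_bound:
  fixes V U g :: "real \<Rightarrow> real \<Rightarrow> real"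
  assumes dx: "0 < dx" and dt: "dt = CFL * dx" and CFL: "0 < CFL" and \<epsilon>: "0 < \<epsilon>"
    and V: "\<And>y. \<bar>V y (real n * dt)\<bar> \<le> A"
    and U: "\<And>a b. \<bar>U a (real n * dt) - U b (real n * dt)\<bar> \<le> L * \<bar>a - b\<bar>"
    and g: "\<And>y. \<bar>g y (real n * dt)\<bar> \<le> B"
  shows "\<bar>iota2 V U g \<epsilon> dx dt n x\<bar> \<le> B + A / (\<epsilon> * dx) + L / (\<epsilon> * CFL)"
proof -
  define T where "T = real n * dt"
  define i where "i = cell dx x"
  define Vi where "Vi j = V (xbar dx j) T" for j
  define Ui where "Ui j = U (xbar dx j) T" for j
  have eq: "iota2 V U g \<epsilon> dx dt n x = g (xbar dx i) T
      + (Vi (i + 1) - Vi (i - 1)) / (2 * \<epsilon> * dx) + (Ui (i + 1) + Ui (i - 1) - 2 * Ui i) / (2 * \<epsilon> * CFL * dx)"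
    using dx CFL \<epsilon> unfolding iota2_def tilde_vx_def Let_def dt
    by (simp add: i_def T_def Vi_def Ui_def dt field_simps)
  have dV: "\<bar>(Vi (i + 1) - Vi (i - 1)) / (2 * \<epsilon> * dx)\<bar> \<le> A / (\<epsilon> * dx)"
  proof -
    have "\<bar>Vi (i + 1) - Vi (i - 1)\<bar> \<le> 2 * A"
      using V[of "xbar dx (i + 1)"] V[of "xbar dx (i - 1)"] by (simp add: Vi_def T_def)
    then show ?thesis using dx \<epsilon> by (simp add: abs_mult field_simps)
  qed
  have dU: "\<bar>(Ui (i + 1) + Ui (i - 1) - 2 * Ui i) / (2 * \<epsilon> * CFL * dx)\<bar> \<le> L / (\<epsilon> * CFL)"
  proof -
    have "\<bar>Ui (i + 1) - Ui i\<bar> \<le> L * dx" "\<bar>Ui (i - 1) - Ui i\<bar> \<le> L * dx"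
      using U[of "xbar dx (i + 1)" "xbar dx i"] U[of "xbar dx (i - 1)" "xbar dx i"] dx
      by (simp_all add: Ui_def T_def xbar_dist)
    then have "\<bar>Ui (i + 1) + Ui (i - 1) - 2 * Ui i\<bar> \<le> 2 * L * dx" by linarith
    then show ?thesis using dx \<epsilon> CFL by (simp add: abs_mult field_simps)
  qed
  have "\<bar>g (xbar dx i) T\<bar> \<le> B" using g by (simp add: T_def)
  from abs_add3_le[OF this dV dU] show ?thesis unfolding eq .
qed

lemma iota1_set_borel_measurable: "set_borel_measurable lborel {0..1} (iota1 V U dx dt n)"
proof -
  define G where "G i = V (xbar dx i) (real n * dt) + dt * tilde_ux V U dx dt n i" for i
  have "iota1 V U dx dt n = (\<lambda>x. G \<lfloor>x / dx\<rfloor>)"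
    by (auto simp: iota1_def G_def cell_def Let_def)
  moreover have "(\<lambda>x. G \<lfloor>x / dx\<rfloor>) \<in> borel_measurable borel" by measurable
  ultimately show ?thesis by (simp add: borel_measurable_imp_set_borel_measurable)
qed

lemma iota2_set_borel_measurable: "set_borel_measurable lborel {0..1} (iota2 V U g \<epsilon> dx dt n)"
proof -
  define G where "G i = g (xbar dx i) (real n * dt) + tilde_vx V U dx dt n i / \<epsilon>" for i
  have "iota2 V U g \<epsilon> dx dt n = (\<lambda>x. G \<lfloor>x / dx\<rfloor>)"
    by (auto simp: iota2_def G_def cell_def Let_def)
  moreover have "(\<lambda>x. G \<lfloor>x / dx\<rfloor>) \<in> borel_measurable borel" by measurable
  ultimately show ?thesis by (simp add: borel_measurable_imp_set_borel_measurable)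
qed

lemma cell_eq_mesh_cell: "x \<in> {0..1} \<Longrightarrow> cell (1 / real N) x = int (mesh_cell N x)"
  by (simp add: cell_def mesh_cell_def mult.commute)

lemma iota2_mesh_step:
  "x \<in> {0..1} \<Longrightarrow> iota2 V U g \<epsilon> (1 / real N) dt n x
     = (\<lambda>k. g (xbar (1 / real N) (int k)) (real n * dt)
            + tilde_vx V U (1 / real N) dt n (int k) / \<epsilon>) (mesh_cell N x)"
  by (simp add: iota2_def Let_def cell_eq_mesh_cell)

lemma a_form_eq_L2_inner:
  assumes "L2 w" "L2 dw" "L2 \<phi>" "L2 d\<phi>"
  shows "a_form \<epsilon> dt w dw \<phi> d\<phi> = gamma_coef \<epsilon> dt * L2_inner dw d\<phi> + L2_inner w \<phi>"
proof -
  have "a_form \<epsilon> dt w dw \<phi> d\<phi>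
      = (LINT x:{0..1}|lborel. gamma_coef \<epsilon> dt * (dw x * d\<phi> x) + w x * \<phi> x)"
    unfolding a_form_def by (simp add: mult.assoc)
  also have "\<dots> = gamma_coef \<epsilon> dt * (LINT x:{0..1}|lborel. dw x * d\<phi> x) + (LINT x:{0..1}|lborel. w x * \<phi> x)"
    using L2_mult_set_integrable[OF assms(2,4)] L2_mult_set_integrable[OF assms(1,3)] by simp
  finally show ?thesis
    unfolding L2_inner_def using L2_set_integral_mult[OF assms(2,4)] L2_set_integral_mult[OF assms(1,3)] by simp
qed

lemma iota_h_eq_L2_inner:
  assumes "L2 (iota1 V U dx dt n)" "L2 (iota2 V U g \<epsilon> dx dt n)" "L2 \<phi>" "L2 d\<phi>"
  shows "iota_h V U g \<epsilon> dx dt n \<phi> d\<phi>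
    = L2_inner (iota1 V U dx dt n) \<phi> - dt\<^sup>2 * (1 - \<epsilon>) * L2_inner (iota2 V U g \<epsilon> dx dt n) d\<phi>"
proof -
  have "iota_h V U g \<epsilon> dx dt n \<phi> d\<phi> = (LINT x:{0..1}|lborel. iota1 V U dx dt n x * \<phi> x
      - dt\<^sup>2 * (1 - \<epsilon>) * (iota2 V U g \<epsilon> dx dt n x * d\<phi> x))"
    unfolding iota_h_def by (simp add: mult.assoc)
  also have "\<dots> = (LINT x:{0..1}|lborel. iota1 V U dx dt n x * \<phi> x)
      - dt\<^sup>2 * (1 - \<epsilon>) * (LINT x:{0..1}|lborel. iota2 V U g \<epsilon> dx dt n x * d\<phi> x)"
    using L2_mult_set_integrable[OF assms(1,3)] L2_mult_set_integrable[OF assms(2,4)] by simp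
  finally show ?thesis
    unfolding L2_inner_def using L2_set_integral_mult[OF assms(1,3)] L2_set_integral_mult[OF assms(2,4)] by simp
qed

lemma iota_bounds:
  fixes V U g :: "real \<Rightarrow> real \<Rightarrow> real"
  assumes \<epsilon>: "0 < \<epsilon>" "\<epsilon> \<le> 1" and CFL: "0 < CFL" "CFL < 1" and N: "0 < N"
    and dx: "dx = 1 / real N" and dt: "dt = CFL * dx" and \<epsilon>_dt: "\<epsilon> \<le> dt"
    and A: "0 \<le> Av" "0 \<le> Au"
    and V: "\<And>y. \<bar>V y (real n * dt)\<bar> \<le> Av * \<epsilon>\<^sup>2"
    and U: "\<And>a b. \<bar>U a (real n * dt) - U b (real n * dt)\<bar> \<le> Au * \<epsilon>\<^sup>2 * \<bar>a - b\<bar>"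
    and g: "\<And>y. \<bar>g y (real n * dt)\<bar> \<le> Bg"
  shows "\<bar>iota1 V U dx dt n x\<bar> \<le> (3 * Av + Au) * \<epsilon>\<^sup>2"
    and "\<bar>iota2 V U g \<epsilon> dx dt n x\<bar> \<le> Bg + Av + Au / CFL"
proof -
  have dx0: "0 < dx" and dt0: "0 < dt" and dt1: "dt \<le> 1"
    using N CFL by (simp_all add: dx dt mult_le_one)
  show "\<bar>iota1 V U dx dt n x\<bar> \<le> (3 * Av + Au) * \<epsilon>\<^sup>2"
    using iota1_bound[where V = V and U = U and n = n and A = "Av * \<epsilon>\<^sup>2" and L = "Au * \<epsilon>\<^sup>2",
        OF dx0 dt0 dt1 _ V U] A
    by (simp add: algebra_simps)
  have "CFL * dx \<le> dx" using dx0 CFL by (intro mult_left_le_one_le) auto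
  then have "\<epsilon> \<le> dx" using \<epsilon>_dt by (simp add: dt)
  then have "Av * \<epsilon>\<^sup>2 / (\<epsilon> * dx) \<le> Av" and "Au * \<epsilon>\<^sup>2 / (\<epsilon> * CFL) \<le> Au / CFL"
    using \<epsilon> dx0 A CFL by (simp_all add: power2_eq_square field_simps mult_left_le mult_left_mono)
  then show "\<bar>iota2 V U g \<epsilon> dx dt n x\<bar> \<le> Bg + Av + Au / CFL"
    using iota2_bound[where V = V and U = U and g = g and n = n, OF dx0 dt CFL(1) \<epsilon>(1) V U g, of x]
    by simp
qed

theorem iota_galerkin_error:
  fixes V U g :: "real \<Rightarrow> real \<Rightarrow> real"
  assumes \<epsilon>: "0 < \<epsilon>" "\<epsilon> \<le> \<epsilon>0" "\<epsilon>0 < 1" and CFL: "0 < CFL" "CFL < 1" and N: "0 < N"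
    and dx: "dx = 1 / real N" and dt: "dt = CFL * dx" and \<epsilon>_dt: "\<epsilon> \<le> dt"
    and A: "0 \<le> Av" "0 \<le> Au"
    and V: "\<And>y. \<bar>V y (real n * dt)\<bar> \<le> Av * \<epsilon>\<^sup>2"
    and U: "\<And>a b. \<bar>U a (real n * dt) - U b (real n * dt)\<bar> \<le> Au * \<epsilon>\<^sup>2 * \<bar>a - b\<bar>"
    and g: "\<And>y. \<bar>g y (real n * dt)\<bar> \<le> Bg"
    and vb: "H01_pair vb dvb" "\<forall>\<phi> d\<phi>. H01_pair \<phi> d\<phi> \<longrightarrow>
       a_form \<epsilon> dt vb dvb \<phi> d\<phi> = iota_h V U g \<epsilon> dx dt n \<phi> d\<phi>"
    and vh: "Vh N vh" "H01_pair vh dvh" "\<forall>\<phi> d\<phi>. Vh N \<phi> \<and> H01_pair \<phi> d\<phi> \<longrightarrow>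
       a_form \<epsilon> dt vh dvh \<phi> d\<phi> = iota_h V U g \<epsilon> dx dt n \<phi> d\<phi>"
  shows "H01_norm (\<lambda>x. dvb x - dvh x)
    \<le> sqrt (error_constant CFL \<epsilon>0 (3 * Av + Au) (Bg + Av + Au / CFL)) * (\<epsilon>\<^sup>2 * dt)"
proof -
  define f where "f = iota1 V U dx dt n"
  define h where "h = iota2 V U g \<epsilon> dx dt n"
  define \<gamma> where "\<gamma> = gamma_coef \<epsilon> dt"
  define \<beta> where "\<beta> = dt\<^sup>2 * (1 - \<epsilon>)"
  have dt0: "0 < dt" using N CFL by (simp add: dx dt)
  have "\<epsilon> \<le> 1" using \<epsilon> by simp
  note bounds = iota_bounds[where V = V and U = U and g = g and n = n, OF \<epsilon>(1) this CFL N dx dt \<epsilon>_dt A V U g]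
  have f_bound: "\<bar>f x\<bar> \<le> (3 * Av + Au) * \<epsilon>\<^sup>2" and h_bound: "\<bar>h x\<bar> \<le> Bg + Av + Au / CFL" for x
    using bounds by (simp_all add: f_def h_def)
  have L2_f: "L2 f" and L2_h: "L2 h"
    using L2_bounded[OF iota1_set_borel_measurable f_bound[unfolded f_def]]
      L2_bounded[OF iota2_set_borel_measurable h_bound[unfolded h_def]] by (simp_all add: f_def h_def)
  have weak_eq: "a_form \<epsilon> dt w dw \<phi> d\<phi> = iota_h V U g \<epsilon> dx dt n \<phi> d\<phi>
      \<longleftrightarrow> \<gamma> * L2_inner dw d\<phi> + L2_inner w \<phi> = L2_inner f \<phi> - \<beta> * L2_inner h d\<phi>"
    if "H01_pair w dw" "H01_pair \<phi> d\<phi>" for w dw \<phi> d\<phi>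
    using that a_form_eq_L2_inner iota_h_eq_L2_inner[OF L2_f[unfolded f_def] L2_h[unfolded h_def]]
    by (simp add: H01_pair_L2 H01_pair_L2_deriv f_def h_def \<gamma>_def \<beta>_def)
  interpret galerkin_pair N \<gamma> \<beta> f h
    "\<lambda>k. g (xbar dx (int k)) (real n * dt) + tilde_vx V U dx dt n (int k) / \<epsilon>" vb dvb vh dvh
  proof
    show "0 < \<gamma>" using \<epsilon> dt0 by (simp add: \<gamma>_def gamma_coef_def)
    show "h x = g (xbar dx (int (mesh_cell N x))) (real n * dt)
        + tilde_vx V U dx dt n (int (mesh_cell N x)) / \<epsilon>" if "x \<in> {0..1}" for x
      using iota2_mesh_step[OF that] by (simp add: h_def dx)
  qed (use N L2_f vb vh weak_eq in auto)
  have "L2_inner (\<lambda>x. dvb x - dvh x) (\<lambda>x. dvb x - dvh x)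
      \<le> error_constant CFL \<epsilon>0 (3 * Av + Au) (Bg + Av + Au / CFL) * (\<epsilon>\<^sup>2 * dt)\<^sup>2"
    using galerkin_error_bound
  proof (rule order_trans)
    show "(1 + 1 / (2 * \<gamma> * (real N)\<^sup>2))
        * (2 * (2 * L2_inner f f + \<beta>\<^sup>2 / \<gamma> * L2_inner h h) / (\<gamma>\<^sup>2 * (real N)\<^sup>2))
      \<le> error_constant CFL \<epsilon>0 (3 * Av + Au) (Bg + Av + Au / CFL) * (\<epsilon>\<^sup>2 * dt)\<^sup>2"
      unfolding \<gamma>_def \<beta>_def
      using N by (intro galerkin_bound_scaling[OF \<epsilon> \<epsilon>_dt CFL(1)] L2_inner_nonneg L2_inner_le_bound)
        (auto simp: dt dx L2_f L2_h f_bound h_bound)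
  qed
  then show ?thesis
    using H01_norm_eq_L2_inner[OF L2_diff[OF dvb_L2 dvh_L2]] real_sqrt_le_mono \<epsilon> dt0
    by (fastforce simp: real_sqrt_mult)
qed

lemma bounded_smooth2_bound: "bounded_smooth2 F \<Longrightarrow> \<exists>B. \<forall>x. \<forall>t\<ge>0. \<bar>F x t\<bar> \<le> B"
  unfolding bounded_smooth2_def using funpow_0 by metis

lemma smooth2_differentiable_x: "smooth2 F \<Longrightarrow> (\<lambda>y. F y t) differentiable (at x)"
  unfolding smooth2_def using funpow_0 by metis

lemma C1_norm_le_abs_le:
  assumes "C1_norm_le f M" "0 \<le> t"
  shows "\<bar>f x t\<bar> \<le> M"
proof -
  obtain a b where "a + b \<le> M" "\<bar>f x t\<bar> \<le> a" "sqrt ((partial_x f x t)\<^sup>2 + (partial_t f x t)\<^sup>2) \<le> b"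
    using assms unfolding C1_norm_le_def by blast
  moreover have "0 \<le> sqrt ((partial_x f x t)\<^sup>2 + (partial_t f x t)\<^sup>2)" by simp
  ultimately show ?thesis by linarith
qed

lemma C1_perturbation_abs_le:
  assumes "C1_norm_le (\<lambda>x t. F x t - \<epsilon>\<^sup>2 * G x t) (K * \<epsilon> ^ 3)"
    and G: "\<And>x t. 0 \<le> t \<Longrightarrow> \<bar>G x t\<bar> \<le> B" and \<epsilon>: "0 < \<epsilon>" "\<epsilon> \<le> 1" and t: "0 \<le> t"
  shows "\<bar>F x t\<bar> \<le> (max B 0 + max K 0) * \<epsilon>\<^sup>2"
proof -
  have "\<bar>F x t - \<epsilon>\<^sup>2 * G x t\<bar> \<le> K * \<epsilon> ^ 3" using C1_norm_le_abs_le[OF assms(1) t] by simp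
  also have "\<dots> \<le> max K 0 * \<epsilon> ^ 3" using \<epsilon> by (intro mult_right_mono) auto
  also have "\<dots> \<le> max K 0 * \<epsilon>\<^sup>2" using \<epsilon> by (intro mult_left_mono power_decreasing) auto
  finally have "\<bar>F x t - \<epsilon>\<^sup>2 * G x t\<bar> \<le> max K 0 * \<epsilon>\<^sup>2" .
  moreover have "\<bar>\<epsilon>\<^sup>2 * G x t\<bar> \<le> \<epsilon>\<^sup>2 * max B 0"
    using G[OF t, of x] by (simp add: abs_mult mult_left_mono)
  ultimately show ?thesis by (simp add: algebra_simps abs_le_iff)
qed

lemma smooth2_lipschitz_x:
  assumes "smooth2 F" "\<And>y. \<bar>partial_x F y t\<bar> \<le> L"
  shows "\<bar>F a t - F b t\<bar> \<le> L * \<bar>a - b\<bar>"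
proof -
  have "((\<lambda>y. F y t) has_field_derivative partial_x F y t) (at y within UNIV)" for y
    using smooth2_differentiable_x[OF assms(1)]
    by (simp add: partial_x_def DERIV_deriv_iff_real_differentiable)
  from field_differentiable_bound[OF convex_UNIV this] assms(2) show ?thesis by simp
qed

lemma A1_data_bounds:
  fixes v u :: "real \<Rightarrow> real \<Rightarrow> real \<Rightarrow> real" and g v2 u2 :: "real \<Rightarrow> real \<Rightarrow> real"
  assumes eps0: "\<epsilon>0 < 1"
    and smooth_u: "\<And>\<epsilon>. 0 < \<epsilon> \<Longrightarrow> \<epsilon> \<le> \<epsilon>0 \<Longrightarrow> smooth2 (u \<epsilon>)"
    and bounded: "bounded_smooth2 v2" "bounded_smooth2 (partial_x u2)" "bounded_smooth2 g"
    and A1: "\<exists>K. \<forall>\<epsilon>. 0 < \<epsilon> \<and> \<epsilon> \<le> \<epsilon>0 \<longrightarrow>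
               C1_norm_le (\<lambda>x t. v \<epsilon> x t - \<epsilon>\<^sup>2 * v2 x t) (K * \<epsilon> ^ 3) \<and>
               C1_norm_le (\<lambda>x t. partial_x (u \<epsilon>) x t - \<epsilon>\<^sup>2 * partial_x u2 x t) (K * \<epsilon> ^ 3)"
  obtains Av Au Bg where "0 \<le> Av" "0 \<le> Au"
    "\<And>\<epsilon> x t. 0 < \<epsilon> \<Longrightarrow> \<epsilon> \<le> \<epsilon>0 \<Longrightarrow> 0 \<le> t \<Longrightarrow> \<bar>v \<epsilon> x t\<bar> \<le> Av * \<epsilon>\<^sup>2"
    "\<And>\<epsilon> a b t. 0 < \<epsilon> \<Longrightarrow> \<epsilon> \<le> \<epsilon>0 \<Longrightarrow> 0 \<le> t \<Longrightarrow> \<bar>u \<epsilon> a t - u \<epsilon> b t\<bar> \<le> Au * \<epsilon>\<^sup>2 * \<bar>a - b\<bar>"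
    "\<And>x t. 0 \<le> t \<Longrightarrow> \<bar>g x t\<bar> \<le> Bg"
proof -
  obtain K where K: "\<And>\<epsilon>. 0 < \<epsilon> \<Longrightarrow> \<epsilon> \<le> \<epsilon>0 \<Longrightarrow>
      C1_norm_le (\<lambda>x t. v \<epsilon> x t - \<epsilon>\<^sup>2 * v2 x t) (K * \<epsilon> ^ 3) \<and>
      C1_norm_le (\<lambda>x t. partial_x (u \<epsilon>) x t - \<epsilon>\<^sup>2 * partial_x u2 x t) (K * \<epsilon> ^ 3)"
    using A1 by blast
  obtain Bv Bu Bg where Bv: "\<And>x t. 0 \<le> t \<Longrightarrow> \<bar>v2 x t\<bar> \<le> Bv"
    and Bu: "\<And>x t. 0 \<le> t \<Longrightarrow> \<bar>partial_x u2 x t\<bar> \<le> Bu" and Bg: "\<And>x t. 0 \<le> t \<Longrightarrow> \<bar>g x t\<bar> \<le> Bg"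
    using bounded_smooth2_bound[OF bounded(1)] bounded_smooth2_bound[OF bounded(2)]
      bounded_smooth2_bound[OF bounded(3)] by metis
  show thesis
  proof (rule that[of "max Bv 0 + max K 0" "max Bu 0 + max K 0" Bg])
    show "\<bar>v \<epsilon> x t\<bar> \<le> (max Bv 0 + max K 0) * \<epsilon>\<^sup>2" if "0 < \<epsilon>" "\<epsilon> \<le> \<epsilon>0" "0 \<le> t" for \<epsilon> x t
      using C1_perturbation_abs_le[OF conjunct1[OF K[OF that(1,2)]] Bv] that eps0 by simp
    show "\<bar>u \<epsilon> a t - u \<epsilon> b t\<bar> \<le> (max Bu 0 + max K 0) * \<epsilon>\<^sup>2 * \<bar>a - b\<bar>"
      if "0 < \<epsilon>" "\<epsilon> \<le> \<epsilon>0" "0 \<le> t" for \<epsilon> a b t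
      using smooth2_lipschitz_x[OF smooth_u] C1_perturbation_abs_le[OF conjunct2[OF K[OF that(1,2)]] Bu]
        that eps0 by simp
  qed (use Bg in auto)
qed

theorem corollary3:
  fixes \<epsilon>0 CFL :: real
    and v u :: "real \<Rightarrow> real \<Rightarrow> real \<Rightarrow> real"
    and g v2 u2 :: "real \<Rightarrow> real \<Rightarrow> real"
  assumes eps0: "\<epsilon>0 < 1"
    and CFL: "0 < CFL" "CFL < 1"
    and smooth_uv: "\<forall>\<epsilon>. 0 < \<epsilon> \<and> \<epsilon> \<le> \<epsilon>0 \<longrightarrow> smooth2 (v \<epsilon>) \<and> smooth2 (u \<epsilon>)"
    and smooth_v2: "bounded_smooth2 v2"
    and smooth_u2: "smooth2 u2" "bounded_smooth2 (partial_x u2)"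
    and smooth_g: "bounded_smooth2 g"
    and pde: "\<forall>\<epsilon>. 0 < \<epsilon> \<and> \<epsilon> \<le> \<epsilon>0 \<longrightarrow> (\<forall>x\<in>{0..1}. \<forall>t\<ge>0.
               partial_t (v \<epsilon>) x t - partial_x (u \<epsilon>) x t = 0 \<and>
               partial_t (u \<epsilon>) x t - partial_x (v \<epsilon>) x t / \<epsilon>\<^sup>2 = g x t)"
    and bc: "\<forall>\<epsilon>. 0 < \<epsilon> \<and> \<epsilon> \<le> \<epsilon>0 \<longrightarrow> (\<forall>t\<ge>0. v \<epsilon> 0 t = 0 \<and> v \<epsilon> 1 t = 0)"
    and A1: "\<exists>K. \<forall>\<epsilon>. 0 < \<epsilon> \<and> \<epsilon> \<le> \<epsilon>0 \<longrightarrow>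
               C1_norm_le (\<lambda>x t. v \<epsilon> x t - \<epsilon>\<^sup>2 * v2 x t) (K * \<epsilon> ^ 3) \<and>
               C1_norm_le (\<lambda>x t. partial_x (u \<epsilon>) x t - \<epsilon>\<^sup>2 * partial_x u2 x t) (K * \<epsilon> ^ 3)"
  shows "\<exists>C. \<forall>\<epsilon> (N::nat) (n::nat) vb dvb vh dvh.
    (let dx = 1 / real N; dt = CFL * dx in
      0 < \<epsilon> \<and> \<epsilon> \<le> \<epsilon>0 \<and> 0 < N \<and> \<epsilon> \<le> dt \<and>
      H01_pair vb dvb \<and>
      (\<forall>\<phi> d\<phi>. H01_pair \<phi> d\<phi> \<longrightarrow>
         a_form \<epsilon> dt vb dvb \<phi> d\<phi> = iota_h (v \<epsilon>) (u \<epsilon>) g \<epsilon> dx dt n \<phi> d\<phi>) \<and>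
      Vh N vh \<and> H01_pair vh dvh \<and>
      (\<forall>\<phi> d\<phi>. Vh N \<phi> \<and> H01_pair \<phi> d\<phi> \<longrightarrow>
         a_form \<epsilon> dt vh dvh \<phi> d\<phi> = iota_h (v \<epsilon>) (u \<epsilon>) g \<epsilon> dx dt n \<phi> d\<phi>)
      \<longrightarrow> H01_norm (\<lambda>x. dvb x - dvh x) \<le> C * (\<epsilon> ^ 6 / dx ^ 3 + \<epsilon> ^ 4 / dx + \<epsilon>\<^sup>2 * dt))"
proof -
  obtain Av Au Bg where A: "0 \<le> Av" "0 \<le> Au"
    and v: "\<And>\<epsilon> x t. 0 < \<epsilon> \<Longrightarrow> \<epsilon> \<le> \<epsilon>0 \<Longrightarrow> 0 \<le> t \<Longrightarrow> \<bar>v \<epsilon> x t\<bar> \<le> Av * \<epsilon>\<^sup>2"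
    and u: "\<And>\<epsilon> a b t. 0 < \<epsilon> \<Longrightarrow> \<epsilon> \<le> \<epsilon>0 \<Longrightarrow> 0 \<le> t \<Longrightarrow> \<bar>u \<epsilon> a t - u \<epsilon> b t\<bar> \<le> Au * \<epsilon>\<^sup>2 * \<bar>a - b\<bar>"
    and g: "\<And>x t. 0 \<le> t \<Longrightarrow> \<bar>g x t\<bar> \<le> Bg"
    using A1_data_bounds[OF eps0 _ smooth_v2 smooth_u2(2) smooth_g A1] smooth_uv by metis
  let ?C = "sqrt (error_constant CFL \<epsilon>0 (3 * Av + Au) (Bg + Av + Au / CFL))"
  show ?thesis
  proof (rule exI[of _ ?C], intro allI, unfold Let_def, intro impI, elim conjE)
    fix \<epsilon> N n vb dvb vh dvh
    let ?dx = "1 / real N" and ?dt = "CFL * (1 / real N)"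
    assume \<epsilon>: "0 < \<epsilon>" "\<epsilon> \<le> \<epsilon>0" and N: "0 < N" and \<epsilon>_dt: "\<epsilon> \<le> ?dt"
      and vb: "H01_pair vb dvb"
        "\<forall>\<phi> d\<phi>. H01_pair \<phi> d\<phi> \<longrightarrow> a_form \<epsilon> ?dt vb dvb \<phi> d\<phi> = iota_h (v \<epsilon>) (u \<epsilon>) g \<epsilon> ?dx ?dt n \<phi> d\<phi>"
      and vh: "Vh N vh" "H01_pair vh dvh"
        "\<forall>\<phi> d\<phi>. Vh N \<phi> \<and> H01_pair \<phi> d\<phi> \<longrightarrow> a_form \<epsilon> ?dt vh dvh \<phi> d\<phi> = iota_h (v \<epsilon>) (u \<epsilon>) g \<epsilon> ?dx ?dt n \<phi> d\<phi>"
    have t: "0 \<le> real n * ?dt" using CFL by simp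
    have "H01_norm (\<lambda>x. dvb x - dvh x) \<le> ?C * (\<epsilon>\<^sup>2 * ?dt)"
      by (rule iota_galerkin_error[OF \<epsilon> eps0 CFL N refl refl \<epsilon>_dt A v[OF \<epsilon> t] u[OF \<epsilon> t] g[OF t] vb vh])
    also have "\<dots> \<le> ?C * (\<epsilon> ^ 6 / ?dx ^ 3 + \<epsilon> ^ 4 / ?dx + \<epsilon>\<^sup>2 * ?dt)"
      by (rule mult_left_mono) (use \<epsilon> error_constant_nonneg in auto)
    finally show "H01_norm (\<lambda>x. dvb x - dvh x) \<le> ?C * (\<epsilon> ^ 6 / ?dx ^ 3 + \<epsilon> ^ 4 / ?dx + \<epsilon>\<^sup>2 * ?dt)" .
  qed
qed

end
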